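(* It holds that $\sqrt{n}(\overline{\boldsymbol\psi}_n-\boldsymbol\psi_0)=O_P(1)$, $\sqrt{n}(\widetilde{\boldsymbol\psi}_n-\boldsymbol\psi_0)=O_P(1)$, and $\sqrt{n}(\check{\boldsymbol\psi}_n-\boldsymbol\psi_0)=O_P(1)$.
   Context: Let $\mathcal{E}$ be a minimally represented regular exponential family with canonical parameter $\boldsymbol\theta\in\Theta$, mean parameter $\boldsymbol\mu\in M$, sufficient statistic split as $\boldsymbol t=(\boldsymbol u,\boldsymbol v)$, and mixed parametrization $\boldsymbol\psi=(\boldsymbol\mu_u,\boldsymbol\theta_v)\in M_u\times\Theta_v$. Let $\mathcal{E}'$ be the mixed convex subfamily with mixed parameters in $M_u'\times\Theta_v'$, $M_u'$, $\Theta_v'$ convex and relatively closed, and let the data be an i.i.d. sample of size $n$ from the distribution with mixed parameter $\boldsymbol\psi_0\in M_u'\times\Theta_v'$, with average sufficient statistic $\boldsymbol t_n=(\boldsymbol u_n,\boldsymbol v_n)$. Define: $\overline{\boldsymbol\psi}_n=(\boldsymbol u_n,\theta_v(\boldsymbol t_n))$, the unrestricted MLE in mixed parametrization; $\widetilde{\boldsymbol\psi}_n$, the MLE over $\mathcal{E}'$; and $\check{\boldsymbol\psi}_n$, the mixed dual estimator, obtained by first minimizing the Kullback–Leibler divergence $\boldsymbol K(\boldsymbol t_n,\boldsymbol\theta)=-\langle\boldsymbol t_n,\boldsymbol\theta\rangle+A^*(\boldsymbol t_n)+A(\boldsymbol\theta)$ over $\boldsymbol\theta$ with $\boldsymbol\theta_v\in\Theta_v'$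 (giving $\widehat{\boldsymbol\theta}_n$), then minimizing $\boldsymbol K(\boldsymbol\mu,\widehat{\boldsymbol\theta}_n)$ over $\boldsymbol\mu\in M$ with $\boldsymbol\mu_u\in M_u'$, expressed in mixed parametrization. $O_P(1)$ means bounded in probability. *)

theory Defs
  imports "HOL-Probability.Probability"
begin

text \<open>Regular exponential family with base measure nu on type 'x and sufficient
statistic t, split as t = (u, v) with u in 'a and v in 'b.\<close>

definition ef_laplace :: "'x measure \<Rightarrow> ('x \<Rightarrow> ('a::euclidean_space \<times> 'b::euclidean_space))
    \<Rightarrow> 'a \<times> 'b \<Rightarrow> ennreal" where
  "ef_laplace \<nu> t \<theta> = (\<integral>\<^sup>+ x. ennreal (exp (t x \<bullet> \<theta>)) \<partial>\<nu>)"

definition nat_param_space :: "'x measure \<Rightarrow> ('x \<Rightarrow> ('a::euclidean_space \<times> 'b::euclidean_space))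
    \<Rightarrow> ('a \<times> 'b) set" where
  "nat_param_space \<nu> t = {\<theta>. ef_laplace \<nu> t \<theta> < \<infinity>}"

definition log_partition :: "'x measure \<Rightarrow> ('x \<Rightarrow> ('a::euclidean_space \<times> 'b::euclidean_space))
    \<Rightarrow> 'a \<times> 'b \<Rightarrow> ereal" where
  "log_partition \<nu> t \<theta> =
     (if \<theta> \<in> nat_param_space \<nu> t then ereal (ln (enn2real (ef_laplace \<nu> t \<theta>))) else \<infinity>)"

definition ef_density :: "'x measure \<Rightarrow> ('x \<Rightarrow> ('a::euclidean_space \<times> 'b::euclidean_space))
    \<Rightarrow> 'a \<times> 'b \<Rightarrow> 'x \<Rightarrow> real" where
  "ef_density \<nu> t \<theta> x = exp (t x \<bullet> \<theta> - real_of_ereal (log_partition \<nu> t \<theta>))"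

definition ef_distr :: "'x measure \<Rightarrow> ('x \<Rightarrow> ('a::euclidean_space \<times> 'b::euclidean_space))
    \<Rightarrow> 'a \<times> 'b \<Rightarrow> 'x measure" where
  "ef_distr \<nu> t \<theta> = density \<nu> (\<lambda>x. ennreal (ef_density \<nu> t \<theta> x))"

definition mean_param :: "'x measure \<Rightarrow> ('x \<Rightarrow> ('a::euclidean_space \<times> 'b::euclidean_space))
    \<Rightarrow> 'a \<times> 'b \<Rightarrow> 'a \<times> 'b" where
  "mean_param \<nu> t \<theta> = (\<integral>x. ef_density \<nu> t \<theta> x *\<^sub>R t x \<partial>\<nu>)"

definition mean_space :: "'x measure \<Rightarrow> ('x \<Rightarrow> ('a::euclidean_space \<times> 'b::euclidean_space))
    \<Rightarrow> ('a \<times> 'b) set" where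
  "mean_space \<nu> t = mean_param \<nu> t ` nat_param_space \<nu> t"

definition canon_of_mean :: "'x measure \<Rightarrow> ('x \<Rightarrow> ('a::euclidean_space \<times> 'b::euclidean_space))
    \<Rightarrow> 'a \<times> 'b \<Rightarrow> 'a \<times> 'b" where
  "canon_of_mean \<nu> t \<mu> = (THE \<theta>. \<theta> \<in> nat_param_space \<nu> t \<and> mean_param \<nu> t \<theta> = \<mu>)"

definition mixed_param :: "'x measure \<Rightarrow> ('x \<Rightarrow> ('a::euclidean_space \<times> 'b::euclidean_space))
    \<Rightarrow> 'a \<times> 'b \<Rightarrow> 'a \<times> 'b" where
  "mixed_param \<nu> t \<theta> = (fst (mean_param \<nu> t \<theta>), snd \<theta>)"

definition conj_A :: "'x measure \<Rightarrow> ('x \<Rightarrow> ('a::euclidean_space \<times> 'b::euclidean_space))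
    \<Rightarrow> 'a \<times> 'b \<Rightarrow> ereal" where
  "conj_A \<nu> t \<mu> = (SUP \<theta>. ereal (\<mu> \<bullet> \<theta>) - log_partition \<nu> t \<theta>)"

definition KL_div :: "'x measure \<Rightarrow> ('x \<Rightarrow> ('a::euclidean_space \<times> 'b::euclidean_space))
    \<Rightarrow> 'a \<times> 'b \<Rightarrow> 'a \<times> 'b \<Rightarrow> ereal" where
  "KL_div \<nu> t \<mu> \<theta> = - ereal (\<mu> \<bullet> \<theta>) + conj_A \<nu> t \<mu> + log_partition \<nu> t \<theta>"

definition minimal_rep :: "'x measure \<Rightarrow> ('x \<Rightarrow> ('a::euclidean_space \<times> 'b::euclidean_space)) \<Rightarrow> bool" where
  "minimal_rep \<nu> t \<longleftrightarrow> (\<forall>a c. (AE x in \<nu>. t x \<bullet> a = c) \<longrightarrow> a = 0)"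

definition regular_ef :: "'x measure \<Rightarrow> ('x \<Rightarrow> ('a::euclidean_space \<times> 'b::euclidean_space)) \<Rightarrow> bool" where
  "regular_ef \<nu> t \<longleftrightarrow> open (nat_param_space \<nu> t) \<and> nat_param_space \<nu> t \<noteq> {}"

definition avg_stat :: "('x \<Rightarrow> ('a::euclidean_space \<times> 'b::euclidean_space)) \<Rightarrow> (nat \<Rightarrow> 'w \<Rightarrow> 'x)
    \<Rightarrow> nat \<Rightarrow> 'w \<Rightarrow> 'a \<times> 'b" where
  "avg_stat t X n \<omega> = (1 / real n) *\<^sub>R (\<Sum>i<n. t (X i \<omega>))"

definition likelihood :: "'x measure \<Rightarrow> ('x \<Rightarrow> ('a::euclidean_space \<times> 'b::euclidean_space))
    \<Rightarrow> (nat \<Rightarrow> 'w \<Rightarrow> 'x) \<Rightarrow> nat \<Rightarrow> 'w \<Rightarrow> 'a \<times> 'b \<Rightarrow> real" where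
  "likelihood \<nu> t X n \<omega> \<theta> = (\<Prod>i<n. ef_density \<nu> t \<theta> (X i \<omega>))"

text \<open>Bounded in (outer) probability, O_P(1).\<close>
definition bounded_in_prob :: "'w measure \<Rightarrow> (nat \<Rightarrow> 'w \<Rightarrow> 'c::real_normed_vector) \<Rightarrow> bool" where
  "bounded_in_prob P Y \<longleftrightarrow>
     (\<forall>\<epsilon>>0. \<exists>C N. \<forall>n\<ge>N. \<exists>E\<in>sets P.
        {\<omega>\<in>space P. norm (Y n \<omega>) > C} \<subseteq> E \<and> measure P E < \<epsilon>)"

end

theory Submission
  imports Defs
begin

text \<open>
  All three estimators are deterministic functions of the average statistic \<open>s = t\<^sub>n\<close>, and
  each of them is locally Lipschitz at \<open>\<mu>\<^sub>0 = \<mu>(\<theta>\<^sub>0)\<close>: there are \<open>\<delta>, K > 0\<close> such that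
  \<open>\<parallel>s - \<mu>\<^sub>0\<parallel> \<le> \<delta>\<close> implies that the estimator lies within \<open>K \<parallel>s - \<mu>\<^sub>0\<parallel>\<close> of \<open>\<psi>\<^sub>0\<close>.
  Since \<open>\<parallel>t\<^sub>n - \<mu>\<^sub>0\<parallel> = O\<^sub>P(n\<^sup>-\<^sup>1\<^sup>/\<^sup>2)\<close> by Chebyshev's inequality, this gives the claim.

  The local Lipschitz property rests on two-sided bounds for the Bregman divergence
  \<open>B(\<theta>', \<theta>) = A(\<theta>) - A(\<theta>') - \<langle>\<mu>(\<theta>'), \<theta> - \<theta>'\<rangle>\<close> of the log-partition function, which is also the
  Kullback-Leibler divergence \<open>K(\<mu>(\<theta>'), \<theta>)\<close>: near \<open>\<theta>\<^sub>0\<close> it is at most quadratic (exponential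
  moments) and at least quadratic in \<open>\<theta> - \<theta>\<^sub>0\<close> (minimality of the representation), and by
  convexity it grows at least linearly far from \<open>\<theta>\<^sub>0\<close>. Hence every \<open>\<theta>\<close> at which
  \<open>\<langle>s, \<theta>\<rangle> - A(\<theta>)\<close> is at least its value at \<open>\<theta>\<^sub>0\<close> is \<open>O(\<parallel>s - \<mu>\<^sub>0\<parallel>)\<close>-close to \<open>\<theta>\<^sub>0\<close>, and
  constrained optimisers exist because the feasible sets are closed near \<open>\<theta>\<^sub>0\<close> and the
  objectives are continuous there.
\<close>

section \<open>Elementary inequalities\<close>

lemma exp_ge_one_plus_min_sq:
  fixes z :: real
  shows "1 + z + min (z\<^sup>2) 1 / 20 \<le> exp z"
proof -
  obtain \<xi> where \<xi>: "\<bar>\<xi>\<bar> \<le> \<bar>z\<bar>" "exp z = (\<Sum>m<2. z ^ m / fact m) + exp \<xi> / fact 2 * z\<^sup>2"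
    using Maclaurin_exp_le[of z 2] by blast
  have taylor: "exp z = 1 + z + exp \<xi> / 2 * z\<^sup>2" using \<xi>(2) by (simp add: numeral_2_eq_2)
  have e1: "1/3 \<le> exp (-1::real)"
    using exp_le by (simp add: exp_minus field_simps)
  have e2: "1/9 \<le> exp (-2::real)"
  proof -
    have "(1/3) * (1/3) \<le> exp (-1) * exp (-1::real)" using e1 by (intro mult_mono) auto
    also have "\<dots> = exp (-2)" by (simp flip: exp_add)
    finally show ?thesis by simp
  qed
  consider "0 \<le> z" | "-1 \<le> z" "z < 0" | "-2 \<le> z" "z < -1" | "z < -2" by linarith
  then show ?thesis
  proof cases
    case 1
    have "min (z\<^sup>2) 1 \<le> z\<^sup>2" "0 \<le> z\<^sup>2" by simp_all
    then show ?thesis using exp_lower_Taylor_quadratic[of z] 1 by linarith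
  next
    case 2
    then have "exp (-1) \<le> exp \<xi>" using \<xi>(1) by simp
    then have "1/3 \<le> exp \<xi>" using e1 by linarith
    then have "1/6 * z\<^sup>2 \<le> exp \<xi> / 2 * z\<^sup>2" by (intro mult_right_mono) auto
    moreover have "min (z\<^sup>2) 1 / 20 \<le> 1/6 * z\<^sup>2" by (simp add: min_def)
    ultimately show ?thesis using taylor by linarith
  next
    case 3
    then have "exp (-2) \<le> exp \<xi>" using \<xi>(1) by simp
    then have "1/9 \<le> exp \<xi>" using e2 by linarith
    moreover have "1 \<le> (-z)\<^sup>2" using 3 by (intro one_le_power) linarith
    ultimately have "1/18 * 1 \<le> exp \<xi> / 2 * z\<^sup>2" using e2 by (intro mult_mono) auto
    then show ?thesis using taylor by (simp add: min_def)
  next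
    case 4
    have "min (z\<^sup>2) 1 / 20 \<le> 1/20" by (simp add: min_def)
    then show ?thesis using 4 exp_gt_zero[of z] by linarith
  qed
qed

lemma exp_le_one_plus_imp_zero:
  fixes z :: real
  assumes "exp z \<le> 1 + z"
  shows "z = 0"
proof (rule ccontr)
  assume "z \<noteq> 0"
  then have "0 < min (z\<^sup>2) 1" by simp
  then show False using exp_ge_one_plus_min_sq[of z] assms by linarith
qed

lemma exp_minus_one_minus_le:
  fixes y :: real
  shows "exp y - 1 - y \<le> y\<^sup>2 * exp \<bar>y\<bar> / 2"
proof -
  obtain \<xi> where \<xi>: "\<bar>\<xi>\<bar> \<le> \<bar>y\<bar>" "exp y = (\<Sum>m<2. y ^ m / fact m) + exp \<xi> / fact 2 * y\<^sup>2"
    using Maclaurin_exp_le[of y 2] by blast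
  have "exp y = 1 + y + exp \<xi> / 2 * y\<^sup>2" using \<xi>(2) by (simp add: numeral_2_eq_2)
  moreover have "exp \<xi> / 2 * y\<^sup>2 \<le> exp \<bar>y\<bar> / 2 * y\<^sup>2" using \<xi>(1) by (intro mult_right_mono) auto
  ultimately show ?thesis by (simp add: mult.commute)
qed

lemma abs_exp_diff_le:
  fixes x y :: real
  shows "\<bar>exp x - exp y\<bar> \<le> \<bar>x - y\<bar> * exp (max x y)"
proof -
  have *: "exp b - exp a \<le> (b - a) * exp b" if "a \<le> b" for a b :: real
  proof -
    have "exp b * (1 + (a - b)) \<le> exp b * exp (a - b)"
      using exp_ge_add_one_self[of "a - b"] by (intro mult_left_mono) auto
    also have "\<dots> = exp a" by (simp flip: exp_add)
    finally show ?thesis by (simp add: algebra_simps)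
  qed
  show ?thesis
    using *[of x y] *[of y x] by (cases "x \<le> y") (auto simp: max_def abs_if)
qed

lemma abs_min_sq_one_diff_le:
  fixes u v :: real
  shows "\<bar>min (u\<^sup>2) 1 - min (v\<^sup>2) 1\<bar> \<le> 2 * \<bar>u - v\<bar>"
proof -
  have eq: "min (w\<^sup>2) 1 = (min \<bar>w\<bar> 1)\<^sup>2" for w :: real
    by (cases "\<bar>w\<bar> \<le> 1") (auto simp: min_def abs_square_le_1 power2_abs abs_square_less_1 not_le)
  define a b where "a = min \<bar>u\<bar> 1" and "b = min \<bar>v\<bar> 1"
  have ab: "0 \<le> a" "a \<le> 1" "0 \<le> b" "b \<le> 1" "\<bar>a - b\<bar> \<le> \<bar>u - v\<bar>" unfolding a_def b_def by auto
  have "a\<^sup>2 - b\<^sup>2 = (a - b) * (a + b)" by (simp add: power2_eq_square algebra_simps)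
  then have "\<bar>a\<^sup>2 - b\<^sup>2\<bar> = \<bar>a - b\<bar> * (a + b)" using ab by (simp add: abs_mult)
  also have "\<dots> \<le> \<bar>u - v\<bar> * 2" using ab by (intro mult_mono) auto
  finally show ?thesis unfolding eq a_def[symmetric] b_def[symmetric] by simp
qed

lemma min_sq_one_scale_le:
  fixes s u :: real
  assumes "0 \<le> s" "s \<le> 1"
  shows "s\<^sup>2 * min (u\<^sup>2) 1 \<le> min ((s * u)\<^sup>2) 1"
proof -
  have s2: "s\<^sup>2 \<le> 1" using assms by (simp add: power_le_one)
  show ?thesis
  proof (cases "u\<^sup>2 \<le> 1")
    case True
    then have "(s * u)\<^sup>2 \<le> 1"
      using s2 by (simp add: power_mult_distrib) (meson mult_le_one zero_le_power2 order_trans)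
    then show ?thesis using True by (simp add: power_mult_distrib min_def)
  next
    case False
    then have "s\<^sup>2 \<le> (s * u)\<^sup>2"
      using assms by (simp add: power_mult_distrib mult_le_cancel_left1 zero_le_power2)
    then show ?thesis using False s2 by (simp add: min_def)
  qed
qed

lemma ln_one_plus_ge_half:
  fixes x :: real
  assumes "0 \<le> x" "x \<le> 1"
  shows "x / 2 \<le> ln (1 + x)"
proof -
  have "ln (1 / (1 + x)) \<le> 1 / (1 + x) - 1" using assms by (intro ln_le_minus_one) auto
  then have "1 - 1 / (1 + x) \<le> ln (1 + x)" using assms by (simp add: ln_div)
  moreover have "x / 2 \<le> 1 - 1 / (1 + x)"
    using assms mult_right_le_one_le[of x x] by (simp add: field_simps)
  ultimately show ?thesis by linarith
qed

lemma le_exp_mult_div: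
  fixes a y :: real
  assumes "0 < a"
  shows "y \<le> exp (a * y) / a"
proof -
  have "a * y \<le> exp (a * y)" using exp_ge_add_one_self[of "a * y"] by linarith
  then show ?thesis using assms by (simp add: field_simps)
qed

lemma sq_le_exp_mult:
  fixes a y :: real
  assumes "0 < a" "0 \<le> y"
  shows "y\<^sup>2 \<le> 4 / a\<^sup>2 * exp (a * y)"
proof -
  have "a * y / 2 \<le> exp (a * y / 2)" using exp_ge_add_one_self[of "a * y / 2"] by linarith
  then have "(a * y / 2)\<^sup>2 \<le> (exp (a * y / 2))\<^sup>2" using assms by (intro power_mono) auto
  also have "\<dots> = exp (a * y)" by (simp add: power2_eq_square flip: exp_add)
  finally show ?thesis using assms by (simp add: field_simps power2_eq_square)
qed

text \<open>For the basis vector \<open>b\<close> maximising \<open>\<bar>\<langle>v, b\<rangle>\<bar>\<close> we have \<open>\<parallel>v\<parallel> \<le> DIM \<bar>\<langle>v, b\<rangle>\<bar>\<close>.\<close>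
lemma exp_inner_plus_norm_le_sum_Basis:
  fixes v \<theta> :: "'v::euclidean_space"
  assumes "0 < R"
  shows "exp (v \<bullet> \<theta> + R / DIM('v) * norm v)
           \<le> (\<Sum>b\<in>Basis. exp (v \<bullet> (\<theta> + R *\<^sub>R b)) + exp (v \<bullet> (\<theta> - R *\<^sub>R b)))"
proof -
  define m where "m = Max ((\<lambda>b. \<bar>v \<bullet> b\<bar>) ` Basis)"
  have "m \<in> (\<lambda>b. \<bar>v \<bullet> b\<bar>) ` Basis" unfolding m_def by (intro Max_in) auto
  then obtain b where b: "b \<in> Basis" "m = \<bar>v \<bullet> b\<bar>" by auto
  have "norm v \<le> (\<Sum>b\<in>Basis. \<bar>v \<bullet> b\<bar>)" by (rule norm_le_l1)
  also have "\<dots> \<le> of_nat DIM('v) * m"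
    by (rule sum_bounded_above) (auto simp: m_def)
  finally have "R / DIM('v) * norm v \<le> R / DIM('v) * (DIM('v) * m)"
    using assms by (intro mult_left_mono) auto
  then have "R / DIM('v) * norm v \<le> R * \<bar>v \<bullet> b\<bar>" using b by simp
  then have "exp (v \<bullet> \<theta> + R / DIM('v) * norm v) \<le> exp (v \<bullet> \<theta> + R * \<bar>v \<bullet> b\<bar>)" by simp
  also have "\<dots> \<le> exp (v \<bullet> (\<theta> + R *\<^sub>R b)) + exp (v \<bullet> (\<theta> - R *\<^sub>R b))"
    by (cases "v \<bullet> b \<ge> 0")
      (auto simp: inner_add_right inner_diff_right abs_if add_increasing2 add_increasing)
  also have "\<dots> \<le> (\<Sum>b\<in>Basis. exp (v \<bullet> (\<theta> + R *\<^sub>R b)) + exp (v \<bullet> (\<theta> - R *\<^sub>R b)))"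
    using b by (intro member_le_sum) (auto intro: add_nonneg_nonneg)
  finally show ?thesis .
qed

lemma norm_Pair_diff_le: "norm ((a, b) - (c, d)) \<le> norm (a - c) + norm (b - d)"
  using norm_Pair_le[of "a - c" "b - d"] by simp

lemma norm_fst_diff_le: "norm (fst u - fst v) \<le> norm (u - v)"
proof -
  have "(fst u - fst v, snd u - snd v) = u - v" by (simp add: prod_eq_iff)
  then show ?thesis using norm_fst_le[of "fst u - fst v" "snd u - snd v"] by simp
qed

lemma norm_snd_diff_le: "norm (snd u - snd v) \<le> norm (u - v)"
proof -
  have "(fst u - fst v, snd u - snd v) = u - v" by (simp add: prod_eq_iff)
  then show ?thesis using norm_snd_le[of "snd u - snd v" "fst u - fst v"] by simp
qed

text \<open>Test with \<open>u = \<epsilon> e\<close> for small \<open>\<epsilon>\<close>.\<close>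
lemma linear_le_quadratic_imp_zero:
  fixes e :: "'v::real_inner"
  assumes r: "0 < r" and C: "0 < C" and le: "\<And>u. norm u \<le> r \<Longrightarrow> e \<bullet> u \<le> C * (norm u)\<^sup>2"
  shows "e = 0"
proof (rule ccontr)
  assume ne: "e \<noteq> 0"
  define \<epsilon> where "\<epsilon> = min (r / norm e) (1 / (2 * C))"
  have \<epsilon>: "0 < \<epsilon>" "C * \<epsilon> \<le> 1/2" unfolding \<epsilon>_def using ne r C by (auto simp: min_def field_simps)
  have "norm (\<epsilon> *\<^sub>R e) = \<epsilon> * norm e" using \<epsilon> by simp
  also have "\<dots> \<le> r / norm e * norm e" unfolding \<epsilon>_def by (intro mult_right_mono) auto
  finally have "e \<bullet> (\<epsilon> *\<^sub>R e) \<le> C * (norm (\<epsilon> *\<^sub>R e))\<^sup>2" using ne by (intro le) simp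
  then have "\<epsilon> * (norm e)\<^sup>2 \<le> C * (\<epsilon>\<^sup>2 * (norm e)\<^sup>2)"
    using \<epsilon> by (simp add: power_mult_distrib power2_norm_eq_inner)
  then have "\<epsilon> * (norm e)\<^sup>2 \<le> \<epsilon> * ((C * \<epsilon>) * (norm e)\<^sup>2)"
    by (simp add: power2_eq_square algebra_simps)
  then have "(norm e)\<^sup>2 \<le> (C * \<epsilon>) * (norm e)\<^sup>2" using \<epsilon> by simp
  also have "\<dots> \<le> 1/2 * (norm e)\<^sup>2" using \<epsilon> by (intro mult_right_mono) auto
  finally show False using ne by simp
qed

section \<open>Regular exponential families\<close>

locale exp_family =
  fixes \<nu> :: "'x measure" and t :: "'x \<Rightarrow> 'a::euclidean_space \<times> 'b::euclidean_space"
  assumes t_measurable[measurable]: "t \<in> borel_measurable \<nu>"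
    and minimal: "minimal_rep \<nu> t"
    and regular: "regular_ef \<nu> t"
begin

abbreviation "\<Theta> \<equiv> nat_param_space \<nu> t"
abbreviation "mu \<equiv> mean_param \<nu> t"

definition Z where "Z \<theta> = (\<integral>x. exp (t x \<bullet> \<theta>) \<partial>\<nu>)"
definition A where "A \<theta> = ln (Z \<theta>)"
definition N where "N \<theta> = (\<integral>x. exp (t x \<bullet> \<theta>) *\<^sub>R t x \<partial>\<nu>)"
definition bregman where "bregman \<theta>' \<theta> = A \<theta> - A \<theta>' - mu \<theta>' \<bullet> (\<theta> - \<theta>')"

text \<open>The normalised log-likelihood of a sample with average statistic \<open>s\<close>.\<close>
definition loglik where "loglik s \<theta> = s \<bullet> \<theta> - A \<theta>"

lemma open_Theta: "open \<Theta>"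
  using regular unfolding regular_ef_def by auto

lemma mem_Theta_iff: "\<theta> \<in> \<Theta> \<longleftrightarrow> integrable \<nu> (\<lambda>x. exp (t x \<bullet> \<theta>))"
  unfolding nat_param_space_def ef_laplace_def by (simp add: integrable_iff_bounded)

lemma emeasure_space_nonzero: "emeasure \<nu> (space \<nu>) \<noteq> 0"
proof
  assume "emeasure \<nu> (space \<nu>) = 0"
  then have "AE x in \<nu>. t x \<bullet> b = 0" for b by (intro AE_I[of _ _ "space \<nu>"]) auto
  then have "b = 0" for b using minimal unfolding minimal_rep_def by blast
  then show False using nonzero_Basis nonempty_Basis by blast
qed

lemma integral_pos_of_pos:
  fixes f :: "'x \<Rightarrow> real"
  assumes "integrable \<nu> f" "\<And>x. x \<in> space \<nu> \<Longrightarrow> 0 < f x"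
  shows "0 < integral\<^sup>L \<nu> f"
proof -
  have "0 \<le> integral\<^sup>L \<nu> f" using assms by (intro integral_nonneg_AE) (auto intro: less_imp_le)
  moreover have "integral\<^sup>L \<nu> f \<noteq> 0"
  proof
    assume "integral\<^sup>L \<nu> f = 0"
    then have "AE x in \<nu>. f x = 0"
      using assms by (subst (asm) integral_nonneg_eq_0_iff_AE) (auto intro: less_imp_le)
    then have "AE x in \<nu>. False" using AE_space by eventually_elim (use assms in force)
    then have "ae_filter \<nu> = bot" by (simp add: eventually_False)
    then show False using emeasure_space_nonzero ae_filter_eq_bot_iff by blast
  qed
  ultimately show ?thesis by simp
qed

lemma Z_pos: "\<theta> \<in> \<Theta> \<Longrightarrow> 0 < Z \<theta>"
  unfolding Z_def by (intro integral_pos_of_pos) (auto simp: mem_Theta_iff)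

lemma log_partition_eq: "\<theta> \<in> \<Theta> \<Longrightarrow> log_partition \<nu> t \<theta> = ereal (A \<theta>)"
proof -
  assume \<theta>: "\<theta> \<in> \<Theta>"
  then have "ef_laplace \<nu> t \<theta> = ennreal (Z \<theta>)"
    unfolding ef_laplace_def Z_def by (intro nn_integral_eq_integral) (auto simp: mem_Theta_iff)
  then show ?thesis unfolding log_partition_def A_def using \<theta> Z_pos by (simp add: less_imp_le)
qed

lemma log_partition_outside: "\<theta> \<notin> \<Theta> \<Longrightarrow> log_partition \<nu> t \<theta> = \<infinity>"
  unfolding log_partition_def by simp

lemma ef_density_eq: "\<theta> \<in> \<Theta> \<Longrightarrow> ef_density \<nu> t \<theta> x = exp (t x \<bullet> \<theta>) / Z \<theta>"
  unfolding ef_density_def using log_partition_eq Z_pos by (simp add: A_def exp_diff)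

lemma mean_param_eq: "\<theta> \<in> \<Theta> \<Longrightarrow> mu \<theta> = (1 / Z \<theta>) *\<^sub>R N \<theta>"
  unfolding mean_param_def N_def
  by (simp add: ef_density_eq flip: integral_scaleR_right)

lemma N_eq: "\<theta> \<in> \<Theta> \<Longrightarrow> N \<theta> = Z \<theta> *\<^sub>R mu \<theta>"
  using mean_param_eq Z_pos by (simp add: less_imp_neq[symmetric])

lemma likelihood_eq:
  assumes \<theta>: "\<theta> \<in> \<Theta>" and n: "0 < n"
  shows "likelihood \<nu> t X n \<omega> \<theta> = exp (real n * loglik (avg_stat t X n \<omega>) \<theta>)"
proof -
  have "likelihood \<nu> t X n \<omega> \<theta> = (\<Prod>i<n. exp (t (X i \<omega>) \<bullet> \<theta> - A \<theta>))"
    unfolding likelihood_def ef_density_eq[OF \<theta>] using Z_pos[OF \<theta>] by (simp add: A_def exp_diff)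
  also have "\<dots> = exp (\<Sum>i<n. t (X i \<omega>) \<bullet> \<theta> - A \<theta>)" by (simp add: exp_sum)
  also have "(\<Sum>i<n. t (X i \<omega>) \<bullet> \<theta> - A \<theta>) = (\<Sum>i<n. t (X i \<omega>)) \<bullet> \<theta> - real n * A \<theta>"
    by (simp add: sum_subtractf inner_sum_left)
  also have "(\<Sum>i<n. t (X i \<omega>)) = real n *\<^sub>R avg_stat t X n \<omega>"
    unfolding avg_stat_def using n by simp
  finally show ?thesis by (simp add: loglik_def algebra_simps)
qed

lemma exp_moment_integrable:
  assumes "\<theta> \<in> \<Theta>"
  shows "\<exists>a>0. integrable \<nu> (\<lambda>x. exp (t x \<bullet> \<theta> + a * norm (t x)))"
proof -
  obtain R where R: "0 < R" "cball \<theta> R \<subseteq> \<Theta>" using open_Theta assms open_contains_cball by blast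
  define a where "a = R / DIM('a \<times> 'b)"
  have a: "0 < a" unfolding a_def using R by (intro divide_pos_pos) (auto simp: add_pos_pos)
  have "\<theta> + R *\<^sub>R b \<in> \<Theta>" "\<theta> - R *\<^sub>R b \<in> \<Theta>" if "b \<in> Basis" for b :: "'a \<times> 'b"
    using that R by (auto simp: dist_norm intro!: subsetD[OF R(2)])
  then have "integrable \<nu> (\<lambda>x. \<Sum>b\<in>Basis. exp (t x \<bullet> (\<theta> + R *\<^sub>R b)) + exp (t x \<bullet> (\<theta> - R *\<^sub>R b)))"
    unfolding mem_Theta_iff by (intro Bochner_Integration.integrable_sum Bochner_Integration.integrable_add) auto
  then have "integrable \<nu> (\<lambda>x. exp (t x \<bullet> \<theta> + a * norm (t x)))"
  proof (rule Bochner_Integration.integrable_bound)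
    show "AE x in \<nu>. norm (exp (t x \<bullet> \<theta> + a * norm (t x)))
        \<le> norm (\<Sum>b\<in>Basis. exp (t x \<bullet> (\<theta> + R *\<^sub>R b)) + exp (t x \<bullet> (\<theta> - R *\<^sub>R b)))"
    proof (intro AE_I2)
      fix x
      have "0 \<le> (\<Sum>b\<in>Basis. exp (t x \<bullet> (\<theta> + R *\<^sub>R b)) + exp (t x \<bullet> (\<theta> - R *\<^sub>R b)))"
        by (intro sum_nonneg add_nonneg_nonneg) auto
      then show "norm (exp (t x \<bullet> \<theta> + a * norm (t x)))
          \<le> norm (\<Sum>b\<in>Basis. exp (t x \<bullet> (\<theta> + R *\<^sub>R b)) + exp (t x \<bullet> (\<theta> - R *\<^sub>R b)))"
        using exp_inner_plus_norm_le_sum_Basis[OF R(1), of "t x" \<theta>, folded a_def] by simp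
    qed
  qed simp
  with a show ?thesis by blast
qed

lemma integrable_exp_mult_norm:
  fixes \<phi> :: "'x \<Rightarrow> real"
  assumes a: "0 < a" and [measurable]: "\<phi> \<in> borel_measurable \<nu>"
    and int: "integrable \<nu> (\<lambda>x. exp (\<phi> x + a * norm (t x)))"
  shows "integrable \<nu> (\<lambda>x. exp (\<phi> x) * norm (t x))"
    and "integrable \<nu> (\<lambda>x. exp (\<phi> x) * (norm (t x))\<^sup>2)"
proof -
  show "integrable \<nu> (\<lambda>x. exp (\<phi> x) * norm (t x))"
  proof (rule Bochner_Integration.integrable_bound[OF integrable_mult_right[OF int, of "1/a"]])
    have "exp (\<phi> x) * norm (t x) \<le> exp (\<phi> x) * (exp (a * norm (t x)) / a)" for x
      using le_exp_mult_div[OF a, of "norm (t x)"] by (intro mult_left_mono) auto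
    then show "AE x in \<nu>. norm (exp (\<phi> x) * norm (t x)) \<le> norm (1 / a * exp (\<phi> x + a * norm (t x)))"
      using a by (intro AE_I2) (simp add: exp_add field_simps)
  qed simp
  show "integrable \<nu> (\<lambda>x. exp (\<phi> x) * (norm (t x))\<^sup>2)"
  proof (rule Bochner_Integration.integrable_bound[OF integrable_mult_right[OF int, of "4/a\<^sup>2"]])
    have "exp (\<phi> x) * (norm (t x))\<^sup>2 \<le> exp (\<phi> x) * (4/a\<^sup>2 * exp (a * norm (t x)))" for x
      using sq_le_exp_mult[OF a, of "norm (t x)"] by (intro mult_left_mono) auto
    then show "AE x in \<nu>. norm (exp (\<phi> x) * (norm (t x))\<^sup>2) \<le> norm (4/a\<^sup>2 * exp (\<phi> x + a * norm (t x)))"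
      using a by (intro AE_I2) (simp add: exp_add field_simps)
  qed simp
qed

lemma integrable_exp_norm_sq:
  assumes "\<theta> \<in> \<Theta>"
  shows "integrable \<nu> (\<lambda>x. exp (t x \<bullet> \<theta>) * (norm (t x))\<^sup>2)"
  using exp_moment_integrable[OF assms] integrable_exp_mult_norm(2)[of _ "\<lambda>x. t x \<bullet> \<theta>"] by auto

lemma integrable_N:
  assumes "\<theta> \<in> \<Theta>"
  shows "integrable \<nu> (\<lambda>x. exp (t x \<bullet> \<theta>) *\<^sub>R t x)"
proof -
  obtain a where "0 < a" "integrable \<nu> (\<lambda>x. exp (t x \<bullet> \<theta> + a * norm (t x)))"
    using exp_moment_integrable[OF assms] by blast
  then have "integrable \<nu> (\<lambda>x. exp (t x \<bullet> \<theta>) * norm (t x))"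
    using integrable_exp_mult_norm(1)[of a "\<lambda>x. t x \<bullet> \<theta>"] by auto
  then show ?thesis by (rule Bochner_Integration.integrable_bound) auto
qed

lemma integral_N_inner:
  assumes "\<theta> \<in> \<Theta>"
  shows "integrable \<nu> (\<lambda>x. exp (t x \<bullet> \<theta>) * (t x \<bullet> h))"
    and "(\<integral>x. exp (t x \<bullet> \<theta>) * (t x \<bullet> h) \<partial>\<nu>) = Z \<theta> * (mu \<theta> \<bullet> h)"
proof -
  show "integrable \<nu> (\<lambda>x. exp (t x \<bullet> \<theta>) * (t x \<bullet> h))"
    using integrable_inner_left[OF integrable_N[OF assms], of h] by simp
  have "(\<integral>x. (exp (t x \<bullet> \<theta>) *\<^sub>R t x) \<bullet> h \<partial>\<nu>) = N \<theta> \<bullet> h"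
    unfolding N_def by (rule integral_inner_left) (use integrable_N[OF assms] in auto)
  then show "(\<integral>x. exp (t x \<bullet> \<theta>) * (t x \<bullet> h) \<partial>\<nu>) = Z \<theta> * (mu \<theta> \<bullet> h)"
    using N_eq[OF assms] by simp
qed

text \<open>The integrand of \<open>Z \<theta> - exp (\<langle>\<mu>(\<theta>'), \<theta> - \<theta>'\<rangle>) Z \<theta>'\<close> below is
  \<open>exp (\<langle>t, \<theta>'\<rangle> + c) (e\<^sup>y - 1 - y) \<ge> 0\<close> with \<open>y = \<langle>t, \<theta> - \<theta>'\<rangle> - c\<close>; it vanishes only where \<open>y = 0\<close>,
  so equality forces \<open>t\<close> onto a hyperplane, which minimality rules out.\<close>
lemma Z_ge_exp_tangent:
  assumes \<theta>': "\<theta>' \<in> \<Theta>" and \<theta>: "\<theta> \<in> \<Theta>"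
  shows "exp (mu \<theta>' \<bullet> (\<theta> - \<theta>')) * Z \<theta>' \<le> Z \<theta>"
    and "exp (mu \<theta>' \<bullet> (\<theta> - \<theta>')) * Z \<theta>' = Z \<theta> \<Longrightarrow> \<theta> = \<theta>'"
proof -
  define h c where "h = \<theta> - \<theta>'" and "c = mu \<theta>' \<bullet> h"
  define g where "g x = exp (t x \<bullet> \<theta>') * exp c * (exp (t x \<bullet> h - c) - (1 + (t x \<bullet> h - c)))" for x
  have g_nonneg: "0 \<le> g x" for x
    unfolding g_def using exp_ge_add_one_self[of "t x \<bullet> h - c"] by (intro mult_nonneg_nonneg) auto
  have g_eq: "g = (\<lambda>x. exp (t x \<bullet> \<theta>)
      - exp c * ((1 - c) * exp (t x \<bullet> \<theta>') + exp (t x \<bullet> \<theta>') * (t x \<bullet> h)))"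
  proof
    fix x
    have "exp (t x \<bullet> \<theta>) = exp (t x \<bullet> \<theta>') * exp c * exp (t x \<bullet> h - c)"
      by (simp add: h_def inner_diff_right flip: exp_add)
    then show "g x = exp (t x \<bullet> \<theta>) - exp c * ((1 - c) * exp (t x \<bullet> \<theta>') + exp (t x \<bullet> \<theta>') * (t x \<bullet> h))"
      unfolding g_def by (simp add: algebra_simps)
  qed
  have int: "integrable \<nu> (\<lambda>x. exp (t x \<bullet> \<theta>'))" "integrable \<nu> (\<lambda>x. exp (t x \<bullet> \<theta>))"
    using \<theta> \<theta>' mem_Theta_iff by blast+
  note int_N = integral_N_inner[OF \<theta>', of h]
  have g_int: "integrable \<nu> g" unfolding g_eq using int int_N(1) by simp
  have "integral\<^sup>L \<nu> g = Z \<theta> - exp c * ((1 - c) * Z \<theta>' + (\<integral>x. exp (t x \<bullet> \<theta>') * (t x \<bullet> h) \<partial>\<nu>))"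
    unfolding g_eq using int int_N(1) by (simp add: Z_def)
  then have g_integral: "integral\<^sup>L \<nu> g = Z \<theta> - exp c * Z \<theta>'"
    unfolding int_N(2) by (simp add: c_def algebra_simps)
  have "0 \<le> integral\<^sup>L \<nu> g" using g_nonneg by (intro integral_nonneg_AE) auto
  then show "exp (mu \<theta>' \<bullet> (\<theta> - \<theta>')) * Z \<theta>' \<le> Z \<theta>" using g_integral by (simp add: c_def h_def)
  assume "exp (mu \<theta>' \<bullet> (\<theta> - \<theta>')) * Z \<theta>' = Z \<theta>"
  then have "integral\<^sup>L \<nu> g = 0" using g_integral by (simp add: c_def h_def)
  then have "AE x in \<nu>. g x = 0"
    using g_int g_nonneg by (subst (asm) integral_nonneg_eq_0_iff_AE) auto
  then have "AE x in \<nu>. t x \<bullet> h = c"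
  proof eventually_elim
    case (elim x)
    then have "exp (t x \<bullet> h - c) = 1 + (t x \<bullet> h - c)" unfolding g_def by simp
    then show ?case using exp_le_one_plus_imp_zero[of "t x \<bullet> h - c"] by simp
  qed
  then have "h = 0" using minimal unfolding minimal_rep_def by blast
  then show "\<theta> = \<theta>'" unfolding h_def by simp
qed

lemma bregman_nonneg:
  assumes "\<theta>' \<in> \<Theta>" "\<theta> \<in> \<Theta>"
  shows "0 \<le> bregman \<theta>' \<theta>"
proof -
  have "ln (exp (mu \<theta>' \<bullet> (\<theta> - \<theta>')) * Z \<theta>') \<le> ln (Z \<theta>)"
    using Z_ge_exp_tangent(1)[OF assms] Z_pos assms by (subst ln_le_cancel_iff) auto
  then show ?thesis using Z_pos[OF assms(1)] by (simp add: bregman_def A_def ln_mult)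
qed

lemma bregman_pos:
  assumes "\<theta>' \<in> \<Theta>" "\<theta> \<in> \<Theta>" "\<theta> \<noteq> \<theta>'"
  shows "0 < bregman \<theta>' \<theta>"
proof -
  have "exp (mu \<theta>' \<bullet> (\<theta> - \<theta>')) * Z \<theta>' < Z \<theta>"
    using Z_ge_exp_tangent[OF assms(1,2)] assms(3) by fastforce
  then have "ln (exp (mu \<theta>' \<bullet> (\<theta> - \<theta>')) * Z \<theta>') < ln (Z \<theta>)"
    using Z_pos assms by (subst ln_less_cancel_iff) auto
  then show ?thesis using Z_pos[OF assms(1)] by (simp add: bregman_def A_def ln_mult)
qed

lemma inj_on_mean_param: "inj_on mu \<Theta>"
proof (rule inj_onI, rule ccontr)
  fix \<theta>1 \<theta>2 assume \<theta>: "\<theta>1 \<in> \<Theta>" "\<theta>2 \<in> \<Theta>" "mu \<theta>1 = mu \<theta>2" "\<theta>1 \<noteq> \<theta>2"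
  then have "0 < bregman \<theta>1 \<theta>2" "0 < bregman \<theta>2 \<theta>1" by (auto intro: bregman_pos)
  then show False using \<theta>(3) by (simp add: bregman_def inner_diff_right)
qed

lemma canon_of_mean_mean_param: "\<theta> \<in> \<Theta> \<Longrightarrow> canon_of_mean \<nu> t (mu \<theta>) = \<theta>"
  unfolding canon_of_mean_def using inj_on_mean_param by (intro the_equality) (auto dest: inj_onD)

lemma loglik_mean_param_diff: "loglik (mu \<theta>') \<theta>' - loglik (mu \<theta>') \<theta> = bregman \<theta>' \<theta>"
  unfolding loglik_def bregman_def by (simp add: inner_diff_right)

lemma conj_A_mean_param:
  assumes \<theta>': "\<theta>' \<in> \<Theta>"
  shows "conj_A \<nu> t (mu \<theta>') = ereal (loglik (mu \<theta>') \<theta>')"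
  unfolding conj_A_def
proof (rule antisym)
  show "(SUP \<theta>. ereal (mu \<theta>' \<bullet> \<theta>) - log_partition \<nu> t \<theta>) \<le> ereal (loglik (mu \<theta>') \<theta>')"
  proof (rule SUP_least)
    fix \<theta>
    show "ereal (mu \<theta>' \<bullet> \<theta>) - log_partition \<nu> t \<theta> \<le> ereal (loglik (mu \<theta>') \<theta>')"
    proof (cases "\<theta> \<in> \<Theta>")
      case True
      then show ?thesis
        using bregman_nonneg[OF \<theta>' True] loglik_mean_param_diff[of \<theta>' \<theta>]
        by (simp add: log_partition_eq loglik_def)
    qed (simp add: log_partition_outside)
  qed
  have "ereal (loglik (mu \<theta>') \<theta>') = ereal (mu \<theta>' \<bullet> \<theta>') - log_partition \<nu> t \<theta>'"
    using \<theta>' by (simp add: log_partition_eq loglik_def)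
  also have "\<dots> \<le> (SUP \<theta>. ereal (mu \<theta>' \<bullet> \<theta>) - log_partition \<nu> t \<theta>)" by (rule SUP_upper) auto
  finally show "ereal (loglik (mu \<theta>') \<theta>') \<le> (SUP \<theta>. ereal (mu \<theta>' \<bullet> \<theta>) - log_partition \<nu> t \<theta>)" .
qed

lemma KL_div_mean_param:
  assumes "\<theta>' \<in> \<Theta>" "\<theta> \<in> \<Theta>"
  shows "KL_div \<nu> t (mu \<theta>') \<theta> = ereal (bregman \<theta>' \<theta>)"
  using assms loglik_mean_param_diff[of \<theta>' \<theta>]
  by (simp add: KL_div_def conj_A_mean_param log_partition_eq loglik_def)

lemma KL_div_mean_param_outside:
  assumes "\<theta>' \<in> \<Theta>" "\<theta> \<notin> \<Theta>"
  shows "KL_div \<nu> t (mu \<theta>') \<theta> = \<infinity>"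
  using assms by (simp add: KL_div_def conj_A_mean_param log_partition_outside)

end

context exp_family
begin

lemma bregman_ray_superlinear:
  assumes \<theta>0: "\<theta>0 \<in> \<Theta>" and \<theta>1: "\<theta>0 + d \<in> \<Theta>" and \<theta>: "\<theta>0 + s *\<^sub>R d \<in> \<Theta>" and s: "1 \<le> s"
  shows "s * bregman \<theta>0 (\<theta>0 + d) \<le> bregman \<theta>0 (\<theta>0 + s *\<^sub>R d)"
proof -
  define \<theta>1 where "\<theta>1 = \<theta>0 + d"
  have f1: "A \<theta>1 + (s - 1) * (mu \<theta>1 \<bullet> d) \<le> A (\<theta>0 + s *\<^sub>R d)"
    using bregman_nonneg[OF \<theta>1 \<theta>] by (simp add: bregman_def \<theta>1_def algebra_simps)
  have f2: "A \<theta>1 - A \<theta>0 - mu \<theta>0 \<bullet> d \<le> mu \<theta>1 \<bullet> d - mu \<theta>0 \<bullet> d"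
    using bregman_nonneg[OF \<theta>1 \<theta>0] by (simp add: bregman_def \<theta>1_def)
  have "(s - 1) * (A \<theta>1 - A \<theta>0 - mu \<theta>0 \<bullet> d) \<le> (s - 1) * (mu \<theta>1 \<bullet> d - mu \<theta>0 \<bullet> d)"
    using f2 s by (intro mult_left_mono) auto
  with f1 show ?thesis by (simp add: bregman_def \<theta>1_def algebra_simps)
qed

end

section \<open>Local bounds near the true parameter\<close>

locale exp_family_at = exp_family +
  fixes \<theta>0
  assumes \<theta>0_in: "\<theta>0 \<in> \<Theta>"
begin

definition a0 where "a0 = (SOME a. 0 < a \<and> integrable \<nu> (\<lambda>x. exp (t x \<bullet> \<theta>0 + a * norm (t x))))"

lemma a0: "0 < a0" "integrable \<nu> (\<lambda>x. exp (t x \<bullet> \<theta>0 + a0 * norm (t x)))"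
  using someI_ex[OF exp_moment_integrable[OF \<theta>0_in]] unfolding a0_def by auto

definition r0 where "r0 = min 1 (a0 / 4)"

lemma r0: "0 < r0" "r0 \<le> 1" "4 * r0 \<le> a0"
  using a0 unfolding r0_def by auto

text \<open>An integrable envelope of \<open>exp \<langle>t, \<theta>\<rangle>\<close> on the ball of radius \<open>2 r0\<close> with two moments.\<close>
definition W where "W x = exp (t x \<bullet> \<theta>0 + a0 / 2 * norm (t x))" for x

lemma W_pos: "0 < W x"
  unfolding W_def by simp

lemma W_integrable: "integrable \<nu> W"
proof (rule Bochner_Integration.integrable_bound[OF a0(2)])
  show "AE x in \<nu>. norm (W x) \<le> norm (exp (t x \<bullet> \<theta>0 + a0 * norm (t x)))"
    using a0(1) by (intro AE_I2) (simp add: W_def)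
qed (unfold W_def, measurable)

lemma W_moments:
  "integrable \<nu> (\<lambda>x. W x * norm (t x))" "integrable \<nu> (\<lambda>x. W x * (norm (t x))\<^sup>2)"
proof -
  have "integrable \<nu> (\<lambda>x. exp ((t x \<bullet> \<theta>0 + a0 / 2 * norm (t x)) + a0 / 2 * norm (t x)))"
    using a0(2) by (simp add: algebra_simps)
  then show "integrable \<nu> (\<lambda>x. W x * norm (t x))" "integrable \<nu> (\<lambda>x. W x * (norm (t x))\<^sup>2)"
    using integrable_exp_mult_norm[of "a0 / 2"] a0(1) unfolding W_def by auto
qed

lemma exp_le_W:
  assumes "norm h + norm k \<le> a0 / 2"
  shows "exp (t x \<bullet> (\<theta>0 + h) + \<bar>t x \<bullet> k\<bar>) \<le> W x"
proof -
  have "t x \<bullet> h \<le> norm (t x) * norm h" by (rule norm_cauchy_schwarz)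
  moreover have "\<bar>t x \<bullet> k\<bar> \<le> norm (t x) * norm k" by (rule Cauchy_Schwarz_ineq2)
  moreover have "norm (t x) * (norm h + norm k) \<le> norm (t x) * (a0 / 2)"
    using assms by (intro mult_left_mono) auto
  ultimately show ?thesis unfolding W_def by (simp add: inner_add_right algebra_simps)
qed

lemma exp_le_W_near:
  assumes "norm (\<theta> - \<theta>0) \<le> 2 * r0"
  shows "exp (t x \<bullet> \<theta>) \<le> W x"
  using exp_le_W[of "\<theta> - \<theta>0" 0 x] assms r0 by simp

lemma mem_Theta_near:
  assumes "norm (\<theta> - \<theta>0) \<le> 2 * r0"
  shows "\<theta> \<in> \<Theta>"
  unfolding mem_Theta_iff
  by (rule Bochner_Integration.integrable_bound[OF W_integrable])
    (use exp_le_W_near[OF assms] W_pos in \<open>auto intro!: AE_I2 simp: less_imp_le\<close>)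

lemma mem_Theta_cball: "\<theta> \<in> cball \<theta>0 r0 \<Longrightarrow> \<theta> \<in> \<Theta>"
  using r0 by (intro mem_Theta_near) (auto simp: dist_norm norm_minus_commute)

definition Zmin where "Zmin = Z \<theta>0 * exp (- (2 * r0) * norm (mu \<theta>0))"

lemma Zmin_pos: "0 < Zmin"
  unfolding Zmin_def using Z_pos[OF \<theta>0_in] by simp

lemma Z_ge_Zmin:
  assumes "norm (\<theta> - \<theta>0) \<le> 2 * r0"
  shows "Zmin \<le> Z \<theta>"
proof -
  have "- (mu \<theta>0 \<bullet> (\<theta> - \<theta>0)) \<le> norm (mu \<theta>0) * norm (\<theta> - \<theta>0)"
    using Cauchy_Schwarz_ineq2[of "mu \<theta>0" "\<theta> - \<theta>0"] by linarith
  also have "\<dots> \<le> norm (mu \<theta>0) * (2 * r0)" using assms by (intro mult_left_mono) auto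
  finally have "exp (- (2 * r0) * norm (mu \<theta>0)) * Z \<theta>0 \<le> exp (mu \<theta>0 \<bullet> (\<theta> - \<theta>0)) * Z \<theta>0"
    using Z_pos[OF \<theta>0_in] by (intro mult_right_mono) (auto simp: algebra_simps)
  also have "\<dots> \<le> Z \<theta>" by (rule Z_ge_exp_tangent(1)[OF \<theta>0_in mem_Theta_near[OF assms]])
  finally show ?thesis unfolding Zmin_def by (simp add: mult.commute)
qed

definition M1 where "M1 = (\<integral>x. W x * norm (t x) \<partial>\<nu>)"
definition M2 where "M2 = (\<integral>x. W x * (norm (t x))\<^sup>2 \<partial>\<nu>)"

lemma M_nonneg: "0 \<le> M1" "0 \<le> M2"
  unfolding M1_def M2_def using W_pos by (auto intro!: integral_nonneg_AE simp: less_imp_le)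

lemma abs_exp_inner_diff_le_W:
  assumes "norm (\<theta> - \<theta>0) \<le> 2 * r0" "norm (\<theta>' - \<theta>0) \<le> 2 * r0"
  shows "\<bar>exp (t x \<bullet> \<theta>) - exp (t x \<bullet> \<theta>')\<bar> \<le> W x * norm (t x) * norm (\<theta> - \<theta>')"
proof -
  have "\<bar>exp (t x \<bullet> \<theta>) - exp (t x \<bullet> \<theta>')\<bar> \<le> \<bar>t x \<bullet> \<theta> - t x \<bullet> \<theta>'\<bar> * exp (max (t x \<bullet> \<theta>) (t x \<bullet> \<theta>'))"
    by (rule abs_exp_diff_le)
  also have "\<dots> \<le> (norm (t x) * norm (\<theta> - \<theta>')) * W x"
  proof (rule mult_mono)
    show "\<bar>t x \<bullet> \<theta> - t x \<bullet> \<theta>'\<bar> \<le> norm (t x) * norm (\<theta> - \<theta>')"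
      using Cauchy_Schwarz_ineq2[of "t x" "\<theta> - \<theta>'"] by (simp add: inner_diff_right)
    show "exp (max (t x \<bullet> \<theta>) (t x \<bullet> \<theta>')) \<le> W x"
      using exp_le_W_near[OF assms(1), of x] exp_le_W_near[OF assms(2), of x] by (simp add: max_def)
  qed auto
  finally show ?thesis by (simp add: algebra_simps)
qed

lemma Z_lipschitz:
  assumes "norm (\<theta> - \<theta>0) \<le> 2 * r0" "norm (\<theta>' - \<theta>0) \<le> 2 * r0"
  shows "\<bar>Z \<theta> - Z \<theta>'\<bar> \<le> M1 * norm (\<theta> - \<theta>')"
proof -
  have "integrable \<nu> (\<lambda>x. exp (t x \<bullet> \<theta>))" "integrable \<nu> (\<lambda>x. exp (t x \<bullet> \<theta>'))"
    using mem_Theta_near[OF assms(1)] mem_Theta_near[OF assms(2)] mem_Theta_iff by auto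
  then have "Z \<theta> - Z \<theta>' = (\<integral>x. exp (t x \<bullet> \<theta>) - exp (t x \<bullet> \<theta>') \<partial>\<nu>)"
    unfolding Z_def by (rule Bochner_Integration.integral_diff[symmetric])
  also have "\<bar>\<dots>\<bar> \<le> (\<integral>x. \<bar>exp (t x \<bullet> \<theta>) - exp (t x \<bullet> \<theta>')\<bar> \<partial>\<nu>)" by (rule integral_abs_bound)
  also have "\<dots> \<le> (\<integral>x. W x * norm (t x) * norm (\<theta> - \<theta>') \<partial>\<nu>)"
    using abs_exp_inner_diff_le_W[OF assms] W_moments(1) W_pos
    by (intro integral_mono') (auto intro!: mult_nonneg_nonneg simp: less_imp_le)
  also have "\<dots> = M1 * norm (\<theta> - \<theta>')" unfolding M1_def by simp
  finally show ?thesis .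
qed

lemma N_lipschitz:
  assumes "norm (\<theta> - \<theta>0) \<le> 2 * r0" "norm (\<theta>' - \<theta>0) \<le> 2 * r0"
  shows "norm (N \<theta> - N \<theta>') \<le> M2 * norm (\<theta> - \<theta>')"
proof -
  have "N \<theta> - N \<theta>' = (\<integral>x. exp (t x \<bullet> \<theta>) *\<^sub>R t x - exp (t x \<bullet> \<theta>') *\<^sub>R t x \<partial>\<nu>)"
    unfolding N_def using integrable_N mem_Theta_near assms
    by (intro Bochner_Integration.integral_diff[symmetric]) auto
  also have "norm \<dots> \<le> (\<integral>x. norm (exp (t x \<bullet> \<theta>) *\<^sub>R t x - exp (t x \<bullet> \<theta>') *\<^sub>R t x) \<partial>\<nu>)"
    by (rule integral_norm_bound)
  also have "\<dots> \<le> (\<integral>x. W x * (norm (t x))\<^sup>2 * norm (\<theta> - \<theta>') \<partial>\<nu>)"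
  proof (intro integral_mono')
    show "integrable \<nu> (\<lambda>x. W x * (norm (t x))\<^sup>2 * norm (\<theta> - \<theta>'))" using W_moments(2) by simp
    fix x
    have "norm (exp (t x \<bullet> \<theta>) *\<^sub>R t x - exp (t x \<bullet> \<theta>') *\<^sub>R t x)
        = \<bar>exp (t x \<bullet> \<theta>) - exp (t x \<bullet> \<theta>')\<bar> * norm (t x)"
      by (simp flip: scaleR_diff_left)
    also have "\<dots> \<le> (W x * norm (t x) * norm (\<theta> - \<theta>')) * norm (t x)"
      using abs_exp_inner_diff_le_W[OF assms] by (intro mult_right_mono) auto
    finally show "norm (exp (t x \<bullet> \<theta>) *\<^sub>R t x - exp (t x \<bullet> \<theta>') *\<^sub>R t x)
        \<le> W x * (norm (t x))\<^sup>2 * norm (\<theta> - \<theta>')"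
      by (simp add: power2_eq_square algebra_simps)
    show "0 \<le> W x * (norm (t x))\<^sup>2 * norm (\<theta> - \<theta>')" using W_pos[of x] by (simp add: less_imp_le)
  qed
  also have "\<dots> = M2 * norm (\<theta> - \<theta>')" unfolding M2_def by simp
  finally show ?thesis .
qed

lemma norm_N_le:
  assumes "norm (\<theta> - \<theta>0) \<le> 2 * r0"
  shows "norm (N \<theta>) \<le> M1"
proof -
  have "norm (N \<theta>) \<le> (\<integral>x. norm (exp (t x \<bullet> \<theta>) *\<^sub>R t x) \<partial>\<nu>)"
    unfolding N_def by (rule integral_norm_bound)
  also have "\<dots> \<le> M1" unfolding M1_def
    using W_moments(1) exp_le_W_near[OF assms] W_pos
    by (intro integral_mono') (auto simp: mult_right_mono less_imp_le)
  finally show ?thesis .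
qed

definition L_mu where "L_mu = M2 / Zmin + M1 * M1 / (Zmin * Zmin)"

lemma L_mu_nonneg: "0 \<le> L_mu"
  unfolding L_mu_def using M_nonneg Zmin_pos by auto

text \<open>From \<open>\<mu> = N / Z\<close>: \<open>\<mu> \<theta> - \<mu> \<theta>' = (N \<theta> - N \<theta>') / Z \<theta> + (1 / Z \<theta> - 1 / Z \<theta>') N \<theta>'\<close>.\<close>
lemma mean_param_lipschitz:
  assumes a1: "norm (\<theta> - \<theta>0) \<le> 2 * r0" and a2: "norm (\<theta>' - \<theta>0) \<le> 2 * r0"
  shows "norm (mu \<theta> - mu \<theta>') \<le> L_mu * norm (\<theta> - \<theta>')"
proof -
  define z z' n n' where "z = Z \<theta>" "z' = Z \<theta>'" "n = N \<theta>" "n' = N \<theta>'"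
  have z: "Zmin \<le> z" "Zmin \<le> z'" using Z_ge_Zmin[OF a1] Z_ge_Zmin[OF a2] unfolding z_z'_n_n'_def by auto
  have zp: "0 < z" "0 < z'" using z Zmin_pos by auto
  have "mu \<theta> - mu \<theta>' = (1/z) *\<^sub>R (n - n') + (1/z - 1/z') *\<^sub>R n'"
    using mean_param_eq[OF mem_Theta_near[OF a1]] mean_param_eq[OF mem_Theta_near[OF a2]]
    unfolding z_z'_n_n'_def by (simp add: algebra_simps)
  also have "norm \<dots> \<le> norm ((1/z) *\<^sub>R (n - n')) + norm ((1/z - 1/z') *\<^sub>R n')" by (rule norm_triangle_ineq)
  also have "norm ((1/z) *\<^sub>R (n - n')) \<le> (1/Zmin) * (M2 * norm (\<theta> - \<theta>'))"
  proof -
    have "norm ((1/z) *\<^sub>R (n - n')) = (1/z) * norm (n - n')" using zp by simp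
    also have "\<dots> \<le> (1/Zmin) * (M2 * norm (\<theta> - \<theta>'))"
      using N_lipschitz[OF a1 a2] z zp Zmin_pos M_nonneg unfolding z_z'_n_n'_def
      by (intro mult_mono) (auto simp: divide_simps)
    finally show ?thesis .
  qed
  also have "norm ((1/z - 1/z') *\<^sub>R n') \<le> (M1 * norm (\<theta> - \<theta>') / (Zmin * Zmin)) * M1"
  proof -
    have "\<bar>1/z - 1/z'\<bar> = \<bar>z' - z\<bar> / (z * z')" using zp by (simp add: field_simps abs_div)
    also have "\<dots> \<le> (M1 * norm (\<theta> - \<theta>')) / (Zmin * Zmin)"
    proof (rule frac_le)
      show "\<bar>z' - z\<bar> \<le> M1 * norm (\<theta> - \<theta>')"
        using Z_lipschitz[OF a1 a2] unfolding z_z'_n_n'_def by (simp add: abs_minus_commute)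
      show "Zmin * Zmin \<le> z * z'" using z Zmin_pos by (intro mult_mono) auto
    qed (use Zmin_pos M_nonneg in auto)
    finally have "\<bar>1/z - 1/z'\<bar> \<le> M1 * norm (\<theta> - \<theta>') / (Zmin * Zmin)" .
    moreover have "norm n' \<le> M1" using norm_N_le[OF a2] unfolding z_z'_n_n'_def .
    ultimately have "\<bar>1/z - 1/z'\<bar> * norm n' \<le> (M1 * norm (\<theta> - \<theta>') / (Zmin * Zmin)) * M1"
      by (intro mult_mono) auto
    then show ?thesis by simp
  qed
  also have "(1/Zmin) * (M2 * norm (\<theta> - \<theta>')) + M1 * norm (\<theta> - \<theta>') / (Zmin * Zmin) * M1
      = L_mu * norm (\<theta> - \<theta>')"
    unfolding L_mu_def by (simp add: algebra_simps)
  finally show ?thesis by simp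
qed

lemma continuous_on_A: "continuous_on (cball \<theta>0 r0) A"
proof -
  have "M1-lipschitz_on (cball \<theta>0 r0) Z"
    using Z_lipschitz r0 M_nonneg
    by (intro lipschitz_onI) (auto simp: dist_norm dist_real_def norm_minus_commute)
  then have "continuous_on (cball \<theta>0 r0) Z" by (rule lipschitz_on_continuous_on)
  moreover have "\<forall>\<theta>\<in>cball \<theta>0 r0. Z \<theta> \<noteq> 0"
    using Z_pos mem_Theta_cball by (metis less_irrefl)
  ultimately show ?thesis unfolding A_def[abs_def] by (rule continuous_on_ln)
qed

lemma continuous_on_mean_param: "continuous_on (cball \<theta>0 r0) mu"
proof -
  have "L_mu-lipschitz_on (cball \<theta>0 r0) mu"
    using mean_param_lipschitz r0 L_mu_nonneg
    by (intro lipschitz_onI) (auto simp: dist_norm norm_minus_commute)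
  then show ?thesis by (rule lipschitz_on_continuous_on)
qed

lemma Z_second_order_le:
  assumes a1: "norm (\<theta>' - \<theta>0) \<le> r0" and a2: "norm h \<le> r0"
  shows "Z (\<theta>' + h) - Z \<theta>' - Z \<theta>' * (mu \<theta>' \<bullet> h) \<le> M2 * (norm h)\<^sup>2"
proof -
  have \<theta>': "\<theta>' \<in> \<Theta>" and \<theta>'h: "\<theta>' + h \<in> \<Theta>"
    using a1 a2 r0 norm_triangle_ineq[of "\<theta>' - \<theta>0" h] by (auto intro!: mem_Theta_near simp: algebra_simps)
  have "Z (\<theta>' + h) - Z \<theta>' - Z \<theta>' * (mu \<theta>' \<bullet> h)
      = (\<integral>x. exp (t x \<bullet> (\<theta>' + h)) - exp (t x \<bullet> \<theta>') - exp (t x \<bullet> \<theta>') * (t x \<bullet> h) \<partial>\<nu>)"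
    using \<theta>' \<theta>'h integral_N_inner[OF \<theta>', of h] unfolding Z_def
    by (simp add: mem_Theta_iff Bochner_Integration.integral_diff)
  also have "\<dots> \<le> (\<integral>x. W x * (norm (t x))\<^sup>2 * (norm h)\<^sup>2 \<partial>\<nu>)"
  proof (intro integral_mono')
    show "integrable \<nu> (\<lambda>x. W x * (norm (t x))\<^sup>2 * (norm h)\<^sup>2)" using W_moments(2) by simp
    show "0 \<le> W x * (norm (t x))\<^sup>2 * (norm h)\<^sup>2" for x using W_pos[of x] by (simp add: less_imp_le)
    fix x
    define y where "y = t x \<bullet> h"
    have "\<bar>y\<bar>\<^sup>2 \<le> (norm (t x) * norm h)\<^sup>2"
      using Cauchy_Schwarz_ineq2[of "t x" h] unfolding y_def by (intro power_mono) auto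
    then have "y\<^sup>2 \<le> (norm (t x))\<^sup>2 * (norm h)\<^sup>2" by (simp add: power_mult_distrib)
    moreover have "exp (t x \<bullet> \<theta>' + \<bar>y\<bar>) \<le> W x"
      using exp_le_W[of "\<theta>' - \<theta>0" h x] a1 a2 r0 by (simp add: y_def)
    ultimately have "y\<^sup>2 * exp (t x \<bullet> \<theta>' + \<bar>y\<bar>) \<le> (norm (t x))\<^sup>2 * (norm h)\<^sup>2 * W x"
      by (intro mult_mono) auto
    moreover have "exp y - 1 - y \<le> y\<^sup>2 * exp \<bar>y\<bar>"
      using exp_minus_one_minus_le[of y] mult_nonneg_nonneg[OF zero_le_power2[of y] exp_ge_zero[of "\<bar>y\<bar>"]]
      by linarith
    then have "exp (t x \<bullet> \<theta>') * (exp y - 1 - y) \<le> exp (t x \<bullet> \<theta>') * (y\<^sup>2 * exp \<bar>y\<bar>)"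
      by (intro mult_left_mono) auto
    ultimately show "exp (t x \<bullet> (\<theta>' + h)) - exp (t x \<bullet> \<theta>') - exp (t x \<bullet> \<theta>') * (t x \<bullet> h)
        \<le> W x * (norm (t x))\<^sup>2 * (norm h)\<^sup>2"
      by (simp add: y_def inner_add_right exp_add algebra_simps)
  qed
  also have "\<dots> = M2 * (norm h)\<^sup>2" unfolding M2_def by simp
  finally show ?thesis .
qed

definition C_up where "C_up = M2 / Zmin + 1"

lemma C_up_pos: "0 < C_up"
  unfolding C_up_def using M_nonneg Zmin_pos by (simp add: add_nonneg_pos)

lemma bregman_le_quadratic:
  assumes a1: "norm (\<theta>' - \<theta>0) \<le> r0" and a2: "norm h \<le> r0"
  shows "bregman \<theta>' (\<theta>' + h) \<le> C_up * (norm h)\<^sup>2"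
proof -
  define z' zh where "z' = Z \<theta>'" "zh = Z (\<theta>' + h)"
  have \<theta>'h: "\<theta>' + h \<in> \<Theta>"
    using a1 a2 r0 norm_triangle_ineq[of "\<theta>' - \<theta>0" h] by (auto intro!: mem_Theta_near simp: algebra_simps)
  have z': "Zmin \<le> z'" "0 < z'" using Z_ge_Zmin[of \<theta>'] a1 r0 Zmin_pos unfolding z'_zh_def by auto
  have zh: "0 < zh" using Z_pos[OF \<theta>'h] unfolding z'_zh_def .
  have "bregman \<theta>' (\<theta>' + h) = ln (zh / z') - mu \<theta>' \<bullet> h"
    unfolding bregman_def A_def z'_zh_def using z' zh by (simp add: ln_div z'_zh_def)
  also have "\<dots> \<le> zh / z' - 1 - mu \<theta>' \<bullet> h" using z' zh by (simp add: ln_le_minus_one)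
  also have "\<dots> = (zh - z' - z' * (mu \<theta>' \<bullet> h)) / z'" using z' by (simp add: field_simps)
  also have "\<dots> \<le> M2 * (norm h)\<^sup>2 / Zmin"
    using Z_second_order_le[OF a1 a2] z' M_nonneg Zmin_pos unfolding z'_zh_def
    by (intro frac_le) auto
  also have "\<dots> \<le> C_up * (norm h)\<^sup>2" unfolding C_up_def using Zmin_pos by (simp add: field_simps)
  finally show ?thesis .
qed

text \<open>\<open>Z \<theta>0 * q u\<close> is a truncated variance of \<open>t\<close> in direction \<open>u\<close> under the unnormalised
  density \<open>exp \<langle>t, \<theta>0\<rangle>\<close>; the truncation at \<open>1\<close> keeps it finite and Lipschitz in \<open>u\<close>.\<close>
definition q where
  "q u = (\<integral>x. exp (t x \<bullet> \<theta>0) * min (((t x - mu \<theta>0) \<bullet> u)\<^sup>2) 1 \<partial>\<nu>) / Z \<theta>0"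

lemma integrable_q:
  "integrable \<nu> (\<lambda>x. exp (t x \<bullet> \<theta>0) * min (((t x - mu \<theta>0) \<bullet> u)\<^sup>2) 1)"
  using \<theta>0_in unfolding mem_Theta_iff
  by (rule Bochner_Integration.integrable_bound) (auto intro!: AE_I2 simp: abs_mult min_def)

lemma q_nonneg: "0 \<le> q u"
  unfolding q_def using Z_pos[OF \<theta>0_in] by (auto intro!: divide_nonneg_pos integral_nonneg_AE)

lemma q_le_one: "q u \<le> 1"
proof -
  have "(\<integral>x. exp (t x \<bullet> \<theta>0) * min (((t x - mu \<theta>0) \<bullet> u)\<^sup>2) 1 \<partial>\<nu>) \<le> Z \<theta>0"
    unfolding Z_def using integrable_q \<theta>0_in by (intro integral_mono) (auto simp: min_def mem_Theta_iff)
  then show ?thesis unfolding q_def using Z_pos[OF \<theta>0_in] by simp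
qed

lemma q_pos:
  assumes "u \<noteq> 0"
  shows "0 < q u"
proof -
  have "(\<integral>x. exp (t x \<bullet> \<theta>0) * min (((t x - mu \<theta>0) \<bullet> u)\<^sup>2) 1 \<partial>\<nu>) \<noteq> 0"
  proof
    assume "(\<integral>x. exp (t x \<bullet> \<theta>0) * min (((t x - mu \<theta>0) \<bullet> u)\<^sup>2) 1 \<partial>\<nu>) = 0"
    then have "AE x in \<nu>. exp (t x \<bullet> \<theta>0) * min (((t x - mu \<theta>0) \<bullet> u)\<^sup>2) 1 = 0"
      using integrable_q by (subst (asm) integral_nonneg_eq_0_iff_AE) auto
    then have "AE x in \<nu>. t x \<bullet> u = mu \<theta>0 \<bullet> u"
      by eventually_elim (auto simp: min_def inner_diff_left split: if_splits)
    then show False using minimal assms unfolding minimal_rep_def by blast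
  qed
  then show ?thesis using q_nonneg[of u] Z_pos[OF \<theta>0_in] unfolding q_def by (simp add: less_le)
qed

definition K_q where "K_q = 2 * (M1 + norm (mu \<theta>0) * Z \<theta>0) / Z \<theta>0"

lemma abs_q_integrand_diff_le:
  "\<bar>exp (t x \<bullet> \<theta>0) * min (((t x - mu \<theta>0) \<bullet> u)\<^sup>2) 1 - exp (t x \<bullet> \<theta>0) * min (((t x - mu \<theta>0) \<bullet> u')\<^sup>2) 1\<bar>
     \<le> 2 * norm (u - u') * (W x * norm (t x) + norm (mu \<theta>0) * exp (t x \<bullet> \<theta>0))"
proof -
  have "\<bar>(t x - mu \<theta>0) \<bullet> u - (t x - mu \<theta>0) \<bullet> u'\<bar> \<le> norm (t x - mu \<theta>0) * norm (u - u')"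
    using Cauchy_Schwarz_ineq2[of "t x - mu \<theta>0" "u - u'"] by (simp add: inner_diff_right)
  also have "\<dots> \<le> (norm (t x) + norm (mu \<theta>0)) * norm (u - u')"
    by (intro mult_right_mono norm_triangle_ineq4) auto
  finally have "exp (t x \<bullet> \<theta>0) * \<bar>min (((t x - mu \<theta>0) \<bullet> u)\<^sup>2) 1 - min (((t x - mu \<theta>0) \<bullet> u')\<^sup>2) 1\<bar>
      \<le> exp (t x \<bullet> \<theta>0) * (2 * ((norm (t x) + norm (mu \<theta>0)) * norm (u - u')))"
    using abs_min_sq_one_diff_le[of "(t x - mu \<theta>0) \<bullet> u" "(t x - mu \<theta>0) \<bullet> u'"]
    by (intro mult_left_mono) auto
  also have "\<dots> \<le> 2 * norm (u - u') * (W x * norm (t x) + norm (mu \<theta>0) * exp (t x \<bullet> \<theta>0))"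
    using exp_le_W_near[of \<theta>0 x] r0
    by (simp add: algebra_simps mult_left_mono mult_right_mono)
  finally show ?thesis by (simp add: abs_mult flip: right_diff_distrib)
qed

lemma q_lipschitz: "\<bar>q u - q u'\<bar> \<le> K_q * norm (u - u')"
proof -
  define F where "F u x = exp (t x \<bullet> \<theta>0) * min (((t x - mu \<theta>0) \<bullet> u)\<^sup>2) 1" for u x
  have "\<bar>(\<integral>x. F u x \<partial>\<nu>) - (\<integral>x. F u' x \<partial>\<nu>)\<bar> = \<bar>\<integral>x. F u x - F u' x \<partial>\<nu>\<bar>"
    using integrable_q unfolding F_def by (subst Bochner_Integration.integral_diff) auto
  also have "\<dots> \<le> (\<integral>x. \<bar>F u x - F u' x\<bar> \<partial>\<nu>)" by (rule integral_abs_bound)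
  also have "\<dots> \<le> (\<integral>x. 2 * norm (u - u') * (W x * norm (t x) + norm (mu \<theta>0) * exp (t x \<bullet> \<theta>0)) \<partial>\<nu>)"
    using W_moments(1) \<theta>0_in W_pos abs_q_integrand_diff_le unfolding F_def mem_Theta_iff
    by (intro integral_mono') (auto intro!: mult_nonneg_nonneg add_nonneg_nonneg simp: less_imp_le)
  also have "\<dots> = 2 * norm (u - u') * (M1 + norm (mu \<theta>0) * Z \<theta>0)"
    using W_moments(1) \<theta>0_in by (simp add: M1_def Z_def mem_Theta_iff)
  finally have I: "\<bar>(\<integral>x. F u x \<partial>\<nu>) - (\<integral>x. F u' x \<partial>\<nu>)\<bar> \<le> 2 * norm (u - u') * (M1 + norm (mu \<theta>0) * Z \<theta>0)" .
  have "\<bar>q u - q u'\<bar> = \<bar>(\<integral>x. F u x \<partial>\<nu>) - (\<integral>x. F u' x \<partial>\<nu>)\<bar> / Z \<theta>0"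
    unfolding q_def F_def using Z_pos[OF \<theta>0_in] by (simp add: abs_div flip: diff_divide_distrib)
  also have "\<dots> \<le> 2 * norm (u - u') * (M1 + norm (mu \<theta>0) * Z \<theta>0) / Z \<theta>0"
    using I Z_pos[OF \<theta>0_in] by (intro divide_right_mono) auto
  also have "\<dots> = K_q * norm (u - u')" unfolding K_q_def by simp
  finally show ?thesis .
qed

lemma q_min_exists: "\<exists>m>0. m \<le> 1 \<and> (\<forall>u. norm u = 1 \<longrightarrow> m \<le> q u)"
proof -
  have "0 \<le> K_q" unfolding K_q_def using M_nonneg Z_pos[OF \<theta>0_in] by auto
  then have "K_q-lipschitz_on (sphere 0 1) q"
    using q_lipschitz by (intro lipschitz_onI) (auto simp: dist_norm dist_real_def)
  then have "continuous_on (sphere 0 1) q" by (rule lipschitz_on_continuous_on)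
  then have "\<exists>w\<in>sphere 0 1. \<forall>y\<in>sphere 0 1. q w \<le> q y"
    by (intro continuous_attains_inf compact_sphere) simp_all
  then obtain w where w: "w \<in> sphere 0 1" "\<forall>y\<in>sphere 0 1. q w \<le> q y" by blast
  then have "0 < q w" by (intro q_pos) auto
  with w q_le_one show ?thesis by (intro exI[of _ "q w"]) auto
qed

definition q_min where "q_min = (SOME m. 0 < m \<and> m \<le> 1 \<and> (\<forall>u. norm u = 1 \<longrightarrow> m \<le> q u))"

lemma q_min: "0 < q_min" "q_min \<le> 1" "norm u = 1 \<Longrightarrow> q_min \<le> q u"
  using someI_ex[OF q_min_exists] unfolding q_min_def by blast+

definition c_low where "c_low = q_min / 40"

lemma c_low_pos: "0 < c_low"
  unfolding c_low_def using q_min by simp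

lemma integral_min_sq_ge:
  assumes "norm h \<le> 1"
  shows "(norm h)\<^sup>2 * (Z \<theta>0 * q_min) \<le> (\<integral>x. exp (t x \<bullet> \<theta>0) * min (((t x - mu \<theta>0) \<bullet> h)\<^sup>2) 1 \<partial>\<nu>)"
proof (cases "h = 0")
  case True
  then show ?thesis by (simp add: integral_nonneg_AE)
next
  case False
  define s u where "s = norm h" and "u = (1 / norm h) *\<^sub>R h"
  have s: "0 < s" "s \<le> 1" and u: "norm u = 1" "h = s *\<^sub>R u"
    using False assms unfolding s_def u_def by auto
  have "s\<^sup>2 * (Z \<theta>0 * q_min) \<le> s\<^sup>2 * (Z \<theta>0 * q u)"
    using q_min(3)[OF u(1)] Z_pos[OF \<theta>0_in] by (intro mult_left_mono) auto
  also have "\<dots> = (\<integral>x. exp (t x \<bullet> \<theta>0) * (s\<^sup>2 * min (((t x - mu \<theta>0) \<bullet> u)\<^sup>2) 1) \<partial>\<nu>)"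
    unfolding q_def using Z_pos[OF \<theta>0_in] by (simp add: algebra_simps)
  also have "\<dots> \<le> (\<integral>x. exp (t x \<bullet> \<theta>0) * min (((t x - mu \<theta>0) \<bullet> h)\<^sup>2) 1 \<partial>\<nu>)"
  proof (rule integral_mono)
    show "integrable \<nu> (\<lambda>x. exp (t x \<bullet> \<theta>0) * (s\<^sup>2 * min (((t x - mu \<theta>0) \<bullet> u)\<^sup>2) 1))"
      using integrable_mult_right[OF integrable_q[of u], of "s\<^sup>2"] by (simp add: algebra_simps)
    show "exp (t x \<bullet> \<theta>0) * (s\<^sup>2 * min (((t x - mu \<theta>0) \<bullet> u)\<^sup>2) 1)
        \<le> exp (t x \<bullet> \<theta>0) * min (((t x - mu \<theta>0) \<bullet> h)\<^sup>2) 1" for x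
      using min_sq_one_scale_le[of s "(t x - mu \<theta>0) \<bullet> u"] s u(2) by (intro mult_left_mono) auto
  qed (rule integrable_q)
  finally show ?thesis unfolding s_def .
qed

text \<open>Integrate \<open>exp (\<langle>t, h\<rangle> - c) \<ge> 1 + (\<langle>t, h\<rangle> - c) + min ((\<langle>t, h\<rangle> - c)\<^sup>2) 1 / 20\<close>,
  \<open>c = \<langle>\<mu>(\<theta>0), h\<rangle>\<close>, against \<open>exp (\<langle>t, \<theta>0\<rangle> + c)\<close>.\<close>
lemma Z_ge_quadratic:
  assumes hr: "norm h \<le> r0"
  shows "exp (mu \<theta>0 \<bullet> h) * (Z \<theta>0 * (1 + (norm h)\<^sup>2 * q_min / 20)) \<le> Z (\<theta>0 + h)"
proof -
  define c where "c = mu \<theta>0 \<bullet> h"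
  define m where "m x = min (((t x - mu \<theta>0) \<bullet> h)\<^sup>2) 1" for x
  define R where "R x = exp c * ((1 - c) * exp (t x \<bullet> \<theta>0) + exp (t x \<bullet> \<theta>0) * (t x \<bullet> h)
                                  + exp (t x \<bullet> \<theta>0) * m x / 20)" for x
  have \<theta>0h: "\<theta>0 + h \<in> \<Theta>" using hr r0 by (intro mem_Theta_near) auto
  note int_N = integral_N_inner[OF \<theta>0_in, of h]
  have int_m: "integrable \<nu> (\<lambda>x. exp (t x \<bullet> \<theta>0) * m x)" unfolding m_def by (rule integrable_q)
  have int0: "integrable \<nu> (\<lambda>x. exp (t x \<bullet> \<theta>0))" using \<theta>0_in mem_Theta_iff by blast
  have "integral\<^sup>L \<nu> R = exp c * ((1 - c) * Z \<theta>0 + (\<integral>x. exp (t x \<bullet> \<theta>0) * (t x \<bullet> h) \<partial>\<nu>)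
                                 + (\<integral>x. exp (t x \<bullet> \<theta>0) * m x \<partial>\<nu>) / 20)"
    unfolding R_def Z_def using int0 int_N(1) int_m by simp
  also have "\<dots> = exp c * (Z \<theta>0 + (\<integral>x. exp (t x \<bullet> \<theta>0) * m x \<partial>\<nu>) / 20)"
    unfolding int_N(2) c_def by (simp add: algebra_simps)
  finally have int_R: "integral\<^sup>L \<nu> R = exp c * (Z \<theta>0 + (\<integral>x. exp (t x \<bullet> \<theta>0) * m x \<partial>\<nu>) / 20)" .
  have "R x \<le> exp (t x \<bullet> (\<theta>0 + h))" for x
  proof -
    define z where "z = t x \<bullet> h - c"
    have "R x = exp (t x \<bullet> \<theta>0) * exp c * (1 + z + min (z\<^sup>2) 1 / 20)"
      unfolding R_def m_def z_def c_def by (simp add: inner_diff_left algebra_simps)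
    also have "\<dots> \<le> exp (t x \<bullet> \<theta>0) * exp c * exp z"
      using exp_ge_one_plus_min_sq[of z] by (intro mult_left_mono) auto
    also have "\<dots> = exp (t x \<bullet> (\<theta>0 + h))"
      unfolding z_def by (simp add: inner_add_right flip: exp_add)
    finally show ?thesis .
  qed
  moreover have "integrable \<nu> R"
    unfolding R_def using int0 int_N(1) int_m
    by (intro integrable_mult_right Bochner_Integration.integrable_add) auto
  ultimately have R_le: "integral\<^sup>L \<nu> R \<le> Z (\<theta>0 + h)"
    unfolding Z_def using \<theta>0h by (intro integral_mono) (auto simp: mem_Theta_iff)
  have "(norm h)\<^sup>2 * (Z \<theta>0 * q_min) \<le> (\<integral>x. exp (t x \<bullet> \<theta>0) * m x \<partial>\<nu>)"
    unfolding m_def using hr r0 by (intro integral_min_sq_ge) auto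
  then have "exp c * (Z \<theta>0 * (1 + (norm h)\<^sup>2 * q_min / 20))
      \<le> exp c * (Z \<theta>0 + (\<integral>x. exp (t x \<bullet> \<theta>0) * m x \<partial>\<nu>) / 20)"
    by (intro mult_left_mono) (auto simp: algebra_simps)
  also have "\<dots> \<le> Z (\<theta>0 + h)" using R_le unfolding int_R .
  finally show ?thesis unfolding c_def .
qed

lemma bregman_ge_quadratic:
  assumes "norm h \<le> r0"
  shows "c_low * (norm h)\<^sup>2 \<le> bregman \<theta>0 (\<theta>0 + h)"
proof -
  define x where "x = (norm h)\<^sup>2 * q_min / 20"
  have x: "0 \<le> x" "x \<le> 1"
    using q_min assms r0 power_le_one[of "norm h" 2] mult_mono[of "(norm h)\<^sup>2" 1 q_min 1]
    unfolding x_def by auto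
  have \<theta>0h: "\<theta>0 + h \<in> \<Theta>" using assms r0 by (intro mem_Theta_near) auto
  have "ln (exp (mu \<theta>0 \<bullet> h) * (Z \<theta>0 * (1 + x))) \<le> ln (Z (\<theta>0 + h))"
    using Z_ge_quadratic[OF assms] Z_pos[OF \<theta>0_in] Z_pos[OF \<theta>0h] x
    by (subst ln_le_cancel_iff) (auto simp: x_def)
  then have "mu \<theta>0 \<bullet> h + A \<theta>0 + ln (1 + x) \<le> A (\<theta>0 + h)"
    unfolding A_def using Z_pos[OF \<theta>0_in] x by (simp add: ln_mult)
  moreover have "c_low * (norm h)\<^sup>2 = x / 2" unfolding c_low_def x_def by simp
  moreover have "bregman \<theta>0 (\<theta>0 + h) = A (\<theta>0 + h) - A \<theta>0 - mu \<theta>0 \<bullet> h"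
    by (simp add: bregman_def)
  ultimately show ?thesis using ln_one_plus_ge_half[OF x] by linarith
qed

lemma bregman_ge_min:
  assumes \<theta>: "\<theta> \<in> \<Theta>"
  shows "c_low * min (norm (\<theta> - \<theta>0)) r0 * norm (\<theta> - \<theta>0) \<le> bregman \<theta>0 \<theta>"
proof (cases "norm (\<theta> - \<theta>0) \<le> r0")
  case True
  then show ?thesis
    using bregman_ge_quadratic[of "\<theta> - \<theta>0"] by (simp add: power2_eq_square min_def)
next
  case False
  define s d where "s = norm (\<theta> - \<theta>0) / r0" and "d = (r0 / norm (\<theta> - \<theta>0)) *\<^sub>R (\<theta> - \<theta>0)"
  have s: "1 \<le> s" and nd: "norm d = r0" and \<theta>_eq: "\<theta> = \<theta>0 + s *\<^sub>R d"
    using False r0 unfolding s_def d_def by auto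
  have \<theta>0d: "\<theta>0 + d \<in> \<Theta>" using nd r0 by (intro mem_Theta_near) auto
  have "c_low * min (norm (\<theta> - \<theta>0)) r0 * norm (\<theta> - \<theta>0) = s * (c_low * (norm d)\<^sup>2)"
    using False r0 nd unfolding s_def by (simp add: min_def power2_eq_square)
  also have "\<dots> \<le> s * bregman \<theta>0 (\<theta>0 + d)"
    using bregman_ge_quadratic[of d] nd s by (intro mult_left_mono) auto
  also have "\<dots> \<le> bregman \<theta>0 \<theta>"
    using bregman_ray_superlinear[OF \<theta>0_in \<theta>0d _ s] \<theta> \<theta>_eq by simp
  finally show ?thesis .
qed

lemma norm_le_if_bregman_le:
  assumes \<theta>: "\<theta> \<in> \<Theta>" and le: "bregman \<theta>0 \<theta> \<le> \<delta> * norm (\<theta> - \<theta>0)"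
    and \<delta>: "0 \<le> \<delta>" "\<delta> < c_low * r0"
  shows "norm (\<theta> - \<theta>0) \<le> \<delta> / c_low"
proof (cases "\<theta> = \<theta>0")
  case True
  then show ?thesis using \<delta> c_low_pos by simp
next
  case False
  have "c_low * min (norm (\<theta> - \<theta>0)) r0 * norm (\<theta> - \<theta>0) \<le> \<delta> * norm (\<theta> - \<theta>0)"
    using bregman_ge_min[OF \<theta>] le by linarith
  then have "c_low * min (norm (\<theta> - \<theta>0)) r0 \<le> \<delta>" using False by simp
  then show ?thesis
    using \<delta> c_low_pos by (cases "norm (\<theta> - \<theta>0) \<le> r0") (auto simp: min_def field_simps)
qed

lemma norm_le_if_loglik_ge:
  assumes \<theta>: "\<theta> \<in> \<Theta>" and ge: "loglik s \<theta>0 \<le> loglik s \<theta>" and s: "norm (s - mu \<theta>0) < c_low * r0"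
  shows "norm (\<theta> - \<theta>0) \<le> norm (s - mu \<theta>0) / c_low"
proof (rule norm_le_if_bregman_le[OF \<theta> _ norm_ge_zero s])
  have "bregman \<theta>0 \<theta> \<le> (s - mu \<theta>0) \<bullet> (\<theta> - \<theta>0)"
    using ge by (simp add: bregman_def loglik_def inner_diff_left inner_diff_right)
  also have "\<dots> \<le> norm (s - mu \<theta>0) * norm (\<theta> - \<theta>0)" by (rule norm_cauchy_schwarz)
  finally show "bregman \<theta>0 \<theta> \<le> norm (s - mu \<theta>0) * norm (\<theta> - \<theta>0)" .
qed

lemma norm_le_mean_param_diff:
  assumes \<theta>: "\<theta> \<in> \<Theta>" and close: "norm (mu \<theta> - mu \<theta>0) < c_low * r0"
  shows "norm (\<theta> - \<theta>0) \<le> norm (mu \<theta> - mu \<theta>0) / c_low"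
  using norm_le_if_loglik_ge[OF \<theta> _ close] bregman_nonneg[OF \<theta> \<theta>0_in]
    loglik_mean_param_diff[of \<theta> \<theta>0]
  by simp

lemma compact_near:
  assumes "closed C" "closed C'"
  shows "compact {\<theta> \<in> cball \<theta>0 r0. mu \<theta> \<in> C \<and> \<theta> \<in> C'}"
proof -
  have eq: "{\<theta> \<in> cball \<theta>0 r0. mu \<theta> \<in> C \<and> \<theta> \<in> C'} = (cball \<theta>0 r0 \<inter> mu -` C) \<inter> C'"
    by auto
  have "closed (cball \<theta>0 r0 \<inter> mu -` C)"
    using continuous_on_mean_param assms(1) by (intro continuous_closed_preimage) auto
  then have "closed {\<theta> \<in> cball \<theta>0 r0. mu \<theta> \<in> C \<and> \<theta> \<in> C'}"
    unfolding eq using assms(2) by (rule closed_Int)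
  moreover have "bounded {\<theta> \<in> cball \<theta>0 r0. mu \<theta> \<in> C \<and> \<theta> \<in> C'}"
    by (rule bounded_subset[OF bounded_cball]) auto
  ultimately show ?thesis using compact_eq_bounded_closed by blast
qed

text \<open>For \<open>s\<close> close to \<open>\<mu>(\<theta>0)\<close>, \<open>loglik s\<close> attains its maximum over any feasible set that
  contains \<open>\<theta>0\<close> and is compact near \<open>\<theta>0\<close>: parameters farther than \<open>r0\<close> from \<open>\<theta>0\<close> are worse
  than \<open>\<theta>0\<close> itself.\<close>
lemma loglik_max_exists:
  assumes s: "norm (s - mu \<theta>0) < c_low * r0"
    and F0: "F \<theta>0" and compact: "compact {\<theta> \<in> cball \<theta>0 r0. F \<theta>}"
  shows "\<exists>\<theta>s\<in>\<Theta>. F \<theta>s \<and> norm (\<theta>s - \<theta>0) \<le> r0 \<and> (\<forall>\<theta>\<in>\<Theta>. F \<theta> \<longrightarrow> loglik s \<theta> \<le> loglik s \<theta>s)"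
proof -
  define K where "K = {\<theta> \<in> cball \<theta>0 r0. F \<theta>}"
  have \<theta>0K: "\<theta>0 \<in> K" unfolding K_def using F0 r0 by simp
  have "continuous_on K (loglik s)"
    using continuous_on_A unfolding loglik_def[abs_def] K_def
    by (intro continuous_intros) (auto elim: continuous_on_subset)
  then obtain \<theta>s where \<theta>s: "\<theta>s \<in> K" "\<And>\<theta>. \<theta> \<in> K \<Longrightarrow> loglik s \<theta> \<le> loglik s \<theta>s"
    using continuous_attains_sup[OF compact[folded K_def]] \<theta>0K by blast
  have "loglik s \<theta> \<le> loglik s \<theta>s" if \<theta>: "\<theta> \<in> \<Theta>" "F \<theta>" for \<theta>
  proof (cases "norm (\<theta> - \<theta>0) \<le> r0")
    case True
    then show ?thesis using \<theta> \<theta>s(2) by (simp add: K_def dist_norm norm_minus_commute)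
  next
    case False
    have "norm (s - mu \<theta>0) / c_low < r0" using s c_low_pos by (simp add: field_simps)
    then have "loglik s \<theta> < loglik s \<theta>0" using norm_le_if_loglik_ge[OF \<theta>(1) _ s] False by force
    also have "\<dots> \<le> loglik s \<theta>s" using \<theta>s(2)[OF \<theta>0K] .
    finally show ?thesis by simp
  qed
  moreover have "\<theta>s \<in> \<Theta>" "F \<theta>s" "norm (\<theta>s - \<theta>0) \<le> r0"
    using \<theta>s(1) mem_Theta_cball unfolding K_def by (auto simp: dist_norm norm_minus_commute)
  ultimately show ?thesis by blast
qed

text \<open>At the unconstrained maximiser \<open>\<theta>s\<close> of \<open>loglik s\<close>, the quadratic upper bound on the
  Bregman divergence gives \<open>\<langle>s - \<mu>(\<theta>s), u\<rangle> \<le> C \<parallel>u\<parallel>\<^sup>2\<close> for all small \<open>u\<close>, hence \<open>\<mu>(\<theta>s) = s\<close>.\<close>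
lemma mean_param_local_surj:
  assumes s: "norm (s - mu \<theta>0) < c_low * r0 / 2"
  obtains \<theta>s where "\<theta>s \<in> \<Theta>" "mu \<theta>s = s" "norm (\<theta>s - \<theta>0) \<le> norm (s - mu \<theta>0) / c_low"
proof -
  have s': "norm (s - mu \<theta>0) < c_low * r0" using s mult_pos_pos[OF c_low_pos r0(1)] by linarith
  have "compact {\<theta> \<in> cball \<theta>0 r0. True}" by (simp del: mem_cball)
  then obtain \<theta>s where \<theta>s: "\<theta>s \<in> \<Theta>" "\<And>\<theta>. \<theta> \<in> \<Theta> \<Longrightarrow> loglik s \<theta> \<le> loglik s \<theta>s"
    using loglik_max_exists[OF s' TrueI] by blast
  have close: "norm (\<theta>s - \<theta>0) \<le> norm (s - mu \<theta>0) / c_low"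
    using norm_le_if_loglik_ge[OF \<theta>s(1) \<theta>s(2)[OF \<theta>0_in] s'] .
  also have "\<dots> \<le> r0 / 2" using s c_low_pos by (simp add: field_simps)
  finally have near: "norm (\<theta>s - \<theta>0) \<le> r0 / 2" .
  have "(s - mu \<theta>s) \<bullet> u \<le> C_up * (norm u)\<^sup>2" if u: "norm u \<le> r0 / 2" for u
  proof -
    have "norm (\<theta>s + u - \<theta>0) \<le> 2 * r0"
      using norm_triangle_ineq[of "\<theta>s - \<theta>0" u] near u r0 by (simp add: algebra_simps)
    then have "loglik s (\<theta>s + u) \<le> loglik s \<theta>s" by (intro \<theta>s(2) mem_Theta_near)
    moreover have "bregman \<theta>s (\<theta>s + u) \<le> C_up * (norm u)\<^sup>2"
      using near u r0 by (intro bregman_le_quadratic) auto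
    ultimately show ?thesis by (simp add: loglik_def bregman_def inner_add_right inner_diff_left)
  qed
  then have "s - mu \<theta>s = 0"
    using r0 linear_le_quadratic_imp_zero[OF _ C_up_pos, of "r0 / 2" "s - mu \<theta>s"] by simp
  then have "mu \<theta>s = s" by simp
  with \<theta>s(1) close show ?thesis using that by blast
qed

definition \<delta>0 where "\<delta>0 = c_low * r0 / (4 * (1 + (2 * C_up + L_mu) / c_low))"

lemma \<delta>0:
  "0 < \<delta>0" "\<delta>0 \<le> c_low * r0 / 4" "(2 * C_up + L_mu) / c_low * \<delta>0 \<le> c_low * r0 / 4"
proof -
  define p k where "p = c_low * r0" and "k = (2 * C_up + L_mu) / c_low"
  have p: "0 < p" and k: "0 \<le> k"
    unfolding p_def k_def using c_low_pos r0 C_up_pos L_mu_nonneg by auto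
  have "k * p \<le> (1 + k) * p" using p by simp
  then show "0 < \<delta>0" "\<delta>0 \<le> c_low * r0 / 4" "(2 * C_up + L_mu) / c_low * \<delta>0 \<le> c_low * r0 / 4"
    using p k unfolding \<delta>0_def p_def[symmetric] k_def[symmetric] by (auto simp: field_simps)
qed

lemma small_deviation:
  assumes "norm (s - mu \<theta>0) \<le> \<delta>0"
  shows "norm (s - mu \<theta>0) < c_low * r0 / 2" "norm (s - mu \<theta>0) < c_low * r0"
    "norm (s - mu \<theta>0) / c_low \<le> r0"
    "(2 * C_up + L_mu) * (norm (s - mu \<theta>0) / c_low) < c_low * r0"
proof -
  have p: "0 < c_low * r0" using c_low_pos r0 by simp
  show "norm (s - mu \<theta>0) < c_low * r0 / 2" "norm (s - mu \<theta>0) < c_low * r0"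
    using assms \<delta>0(2) p by linarith+
  show "norm (s - mu \<theta>0) / c_low \<le> r0"
    using assms \<delta>0(2) p c_low_pos by (simp add: field_simps)
  have "(2 * C_up + L_mu) / c_low * norm (s - mu \<theta>0) \<le> (2 * C_up + L_mu) / c_low * \<delta>0"
    using assms C_up_pos L_mu_nonneg c_low_pos by (intro mult_left_mono) auto
  also have "\<dots> \<le> c_low * r0 / 4" by (rule \<delta>0(3))
  finally have "(2 * C_up + L_mu) / c_low * norm (s - mu \<theta>0) < c_low * r0" using p by linarith
  then show "(2 * C_up + L_mu) * (norm (s - mu \<theta>0) / c_low) < c_low * r0" by (simp add: field_simps)
qed

lemma unrestricted_estimator_bound:
  assumes "norm (s - mu \<theta>0) \<le> \<delta>0"
  shows "norm ((fst s, snd (canon_of_mean \<nu> t s)) - mixed_param \<nu> t \<theta>0)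
           \<le> (1 + 1 / c_low) * norm (s - mu \<theta>0)"
proof -
  obtain \<theta>s where \<theta>s: "\<theta>s \<in> \<Theta>" "mu \<theta>s = s" "norm (\<theta>s - \<theta>0) \<le> norm (s - mu \<theta>0) / c_low"
    using mean_param_local_surj small_deviation(1)[OF assms] by blast
  have "norm ((fst s, snd \<theta>s) - mixed_param \<nu> t \<theta>0) \<le> norm (fst s - fst (mu \<theta>0)) + norm (snd \<theta>s - snd \<theta>0)"
    unfolding mixed_param_def by (rule norm_Pair_diff_le)
  also have "\<dots> \<le> norm (s - mu \<theta>0) + norm (\<theta>s - \<theta>0)"
    using norm_fst_diff_le[of s "mu \<theta>0"] norm_snd_diff_le[of \<theta>s \<theta>0] by simp
  also have "\<dots> \<le> (1 + 1 / c_low) * norm (s - mu \<theta>0)" using \<theta>s(3) by (simp add: algebra_simps)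
  finally show ?thesis using canon_of_mean_mean_param[OF \<theta>s(1)] \<theta>s(2) by simp
qed

end

context exp_family_at
begin

lemma bregman_ge_dual_test:
  assumes \<theta>': "\<theta>' \<in> \<Theta>" and \<theta>h: "norm (\<theta>h - \<theta>0) \<le> r0" and u: "norm u \<le> r0"
  shows "(mu \<theta>' - mu \<theta>h) \<bullet> u - C_up * (norm u)\<^sup>2 \<le> bregman \<theta>' \<theta>h"
proof -
  have "norm (\<theta>h + u - \<theta>0) \<le> 2 * r0"
    using norm_triangle_ineq[of "\<theta>h - \<theta>0" u] \<theta>h u by (simp add: algebra_simps)
  then have "0 \<le> bregman \<theta>' (\<theta>h + u)" by (intro bregman_nonneg \<theta>' mem_Theta_near)
  moreover have "bregman \<theta>h (\<theta>h + u) \<le> C_up * (norm u)\<^sup>2" by (rule bregman_le_quadratic[OF \<theta>h u])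
  ultimately show ?thesis
    by (simp add: bregman_def inner_diff_left inner_diff_right inner_add_right)
qed

lemma mean_param_close_if_bregman_le:
  assumes \<theta>': "\<theta>' \<in> \<Theta>" and \<theta>h: "norm (\<theta>h - \<theta>0) \<le> \<rho>" and \<rho>: "\<rho> \<le> r0"
    and le: "bregman \<theta>' \<theta>h \<le> C_up * \<rho>\<^sup>2"
  shows "norm (mu \<theta>' - mu \<theta>h) \<le> 2 * C_up * \<rho>"
proof (rule ccontr)
  define D where "D = mu \<theta>' - mu \<theta>h"
  have \<rho>0: "0 \<le> \<rho>" using \<theta>h norm_ge_zero order_trans by blast
  have test: "D \<bullet> u - C_up * (norm u)\<^sup>2 \<le> C_up * \<rho>\<^sup>2" if "norm u \<le> r0" for u
    using bregman_ge_dual_test[OF \<theta>' _ that, of \<theta>h] \<theta>h \<rho> le unfolding D_def by simp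
  assume "\<not> norm (mu \<theta>' - mu \<theta>h) \<le> 2 * C_up * \<rho>"
  then have big: "2 * C_up * \<rho> < norm D" unfolding D_def by simp
  have C: "0 < C_up" by (rule C_up_pos)
  have DD: "D \<bullet> D = norm D * norm D" by (simp add: dot_square_norm power2_eq_square)
  show False
  proof (cases "norm D \<le> 2 * C_up * r0")
    case True
    define u where "u = (1 / (2 * C_up)) *\<^sub>R D"
    have nu: "norm u = norm D / (2 * C_up)" unfolding u_def using C by simp
    have "D \<bullet> u - C_up * (norm u)\<^sup>2 = (norm D)\<^sup>2 / (4 * C_up)"
      unfolding nu unfolding u_def using C DD by (simp add: power_divide field_simps power2_eq_square)
    moreover have "(2 * C_up * \<rho>)\<^sup>2 < (norm D)\<^sup>2" using big \<rho>0 C by (intro power_strict_mono) auto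
    then have "C_up * \<rho>\<^sup>2 < (norm D)\<^sup>2 / (4 * C_up)" using C by (simp add: field_simps power2_eq_square)
    moreover have "norm u \<le> r0" unfolding nu using True C by (simp add: field_simps)
    ultimately show False using test by fastforce
  next
    case False
    define u where "u = (r0 / norm D) *\<^sub>R D"
    have D0: "D \<noteq> 0" using False C r0 by auto
    have nu: "norm u = r0" unfolding u_def using D0 r0 by simp
    have "D \<bullet> u = r0 * norm D" unfolding u_def using D0 DD by simp
    moreover have "2 * C_up * r0 * r0 < norm D * r0" using False r0 by (intro mult_strict_right_mono) auto
    moreover have "C_up * \<rho>\<^sup>2 \<le> C_up * r0\<^sup>2" using \<rho>0 \<rho> C by (intro mult_left_mono power_mono) auto
    ultimately have "C_up * \<rho>\<^sup>2 < D \<bullet> u - C_up * (norm u)\<^sup>2" unfolding nu by (simp add: power2_eq_square algebra_simps)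
    then show False using test[of u] nu by simp
  qed
qed

lemma dual_candidate_close:
  assumes \<theta>': "\<theta>' \<in> \<Theta>" and \<theta>h: "norm (\<theta>h - \<theta>0) \<le> \<rho>" and \<rho>: "\<rho> \<le> r0"
    and small: "(2 * C_up + L_mu) * \<rho> < c_low * r0"
    and le: "bregman \<theta>' \<theta>h \<le> bregman \<theta>0 \<theta>h"
  shows "norm (mu \<theta>' - mu \<theta>0) \<le> (2 * C_up + L_mu) * \<rho>"
    and "norm (\<theta>' - \<theta>0) \<le> (2 * C_up + L_mu) * \<rho> / c_low"
proof -
  have \<theta>h0: "norm (\<theta>h - \<theta>0) \<le> r0" using \<theta>h \<rho> by simp
  have "bregman \<theta>0 (\<theta>0 + (\<theta>h - \<theta>0)) \<le> C_up * (norm (\<theta>h - \<theta>0))\<^sup>2"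
    using \<theta>h0 r0 by (intro bregman_le_quadratic) auto
  also have "\<dots> \<le> C_up * \<rho>\<^sup>2" using \<theta>h C_up_pos by (intro mult_left_mono power_mono) auto
  finally have "norm (mu \<theta>' - mu \<theta>h) \<le> 2 * C_up * \<rho>"
    using le by (intro mean_param_close_if_bregman_le[OF \<theta>' \<theta>h \<rho>]) simp
  moreover have "norm (mu \<theta>h - mu \<theta>0) \<le> L_mu * \<rho>"
  proof -
    have "norm (mu \<theta>h - mu \<theta>0) \<le> L_mu * norm (\<theta>h - \<theta>0)"
      using mean_param_lipschitz[of \<theta>h \<theta>0] \<theta>h0 r0 by simp
    also have "\<dots> \<le> L_mu * \<rho>" using \<theta>h L_mu_nonneg by (intro mult_left_mono)
    finally show ?thesis .
  qed
  ultimately show m: "norm (mu \<theta>' - mu \<theta>0) \<le> (2 * C_up + L_mu) * \<rho>"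
    using norm_triangle_ineq[of "mu \<theta>' - mu \<theta>h" "mu \<theta>h - mu \<theta>0"] by (simp add: algebra_simps)
  then have "norm (\<theta>' - \<theta>0) \<le> norm (mu \<theta>' - mu \<theta>0) / c_low"
    using small by (intro norm_le_mean_param_diff[OF \<theta>']) simp
  also have "\<dots> \<le> (2 * C_up + L_mu) * \<rho> / c_low" using m c_low_pos by (simp add: divide_right_mono)
  finally show "norm (\<theta>' - \<theta>0) \<le> (2 * C_up + L_mu) * \<rho> / c_low" .
qed

end

section \<open>The restricted estimators\<close>

locale mixed_subfamily = exp_family_at +
  fixes Mu' Thv'
  assumes Mu'_closed: "closedin (top_of_set (fst ` mean_space \<nu> t)) Mu'"
    and Thv'_closed: "closedin (top_of_set (snd ` \<Theta>)) Thv'"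
    and \<psi>0_in: "mixed_param \<nu> t \<theta>0 \<in> Mu' \<times> Thv'"
begin

lemma \<theta>0_feasible: "fst (mu \<theta>0) \<in> Mu'" "snd \<theta>0 \<in> Thv'"
  using \<psi>0_in unfolding mixed_param_def by auto

lemma Mu'_closed_near:
  obtains C where "closed C" "\<And>\<theta>. \<theta> \<in> \<Theta> \<Longrightarrow> fst (mu \<theta>) \<in> Mu' \<longleftrightarrow> mu \<theta> \<in> C"
proof -
  obtain T where T: "closed T" "Mu' = fst ` mean_space \<nu> t \<inter> T"
    using Mu'_closed closedin_closed by blast
  have eq: "fst -` T = T \<times> UNIV" by auto
  have "closed (fst -` T)" unfolding eq by (rule closed_Times[OF T(1) closed_UNIV])
  moreover have "fst (mu \<theta>) \<in> Mu' \<longleftrightarrow> mu \<theta> \<in> fst -` T" if "\<theta> \<in> \<Theta>" for \<theta>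
    using that T(2) unfolding mean_space_def by auto
  ultimately show ?thesis using that by blast
qed

lemma Thv'_closed_near:
  obtains C where "closed C" "\<And>\<theta>. \<theta> \<in> \<Theta> \<Longrightarrow> snd \<theta> \<in> Thv' \<longleftrightarrow> \<theta> \<in> C"
proof -
  obtain T where T: "closed T" "Thv' = snd ` \<Theta> \<inter> T"
    using Thv'_closed closedin_closed by blast
  have eq: "snd -` T = UNIV \<times> T" by auto
  have "closed (snd -` T)" unfolding eq by (rule closed_Times[OF closed_UNIV T(1)])
  moreover have "snd \<theta> \<in> Thv' \<longleftrightarrow> \<theta> \<in> snd -` T" if "\<theta> \<in> \<Theta>" for \<theta>
    using that T(2) by auto
  ultimately show ?thesis using that by blast
qed

lemma compact_feasible:
  "compact {\<theta> \<in> cball \<theta>0 r0. fst (mu \<theta>) \<in> Mu' \<and> snd \<theta> \<in> Thv'}"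
  "compact {\<theta> \<in> cball \<theta>0 r0. snd \<theta> \<in> Thv'}"
  "compact {\<theta> \<in> cball \<theta>0 r0. fst (mu \<theta>) \<in> Mu'}"
proof -
  obtain Cu where Cu: "closed Cu" "\<And>\<theta>. \<theta> \<in> \<Theta> \<Longrightarrow> fst (mu \<theta>) \<in> Mu' \<longleftrightarrow> mu \<theta> \<in> Cu"
    using Mu'_closed_near by blast
  obtain Cv where Cv: "closed Cv" "\<And>\<theta>. \<theta> \<in> \<Theta> \<Longrightarrow> snd \<theta> \<in> Thv' \<longleftrightarrow> \<theta> \<in> Cv"
    using Thv'_closed_near by blast
  have "{\<theta> \<in> cball \<theta>0 r0. fst (mu \<theta>) \<in> Mu' \<and> snd \<theta> \<in> Thv'} = {\<theta> \<in> cball \<theta>0 r0. mu \<theta> \<in> Cu \<and> \<theta> \<in> Cv}"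
    "{\<theta> \<in> cball \<theta>0 r0. snd \<theta> \<in> Thv'} = {\<theta> \<in> cball \<theta>0 r0. mu \<theta> \<in> UNIV \<and> \<theta> \<in> Cv}"
    "{\<theta> \<in> cball \<theta>0 r0. fst (mu \<theta>) \<in> Mu'} = {\<theta> \<in> cball \<theta>0 r0. mu \<theta> \<in> Cu \<and> \<theta> \<in> UNIV}"
    using Cu(2) Cv(2) mem_Theta_cball by blast+
  then show "compact {\<theta> \<in> cball \<theta>0 r0. fst (mu \<theta>) \<in> Mu' \<and> snd \<theta> \<in> Thv'}"
    "compact {\<theta> \<in> cball \<theta>0 r0. snd \<theta> \<in> Thv'}"
    "compact {\<theta> \<in> cball \<theta>0 r0. fst (mu \<theta>) \<in> Mu'}"
    using compact_near[OF Cu(1) Cv(1)] compact_near[OF closed_UNIV Cv(1)]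
      compact_near[OF Cu(1) closed_UNIV]
    by simp_all
qed

lemma restricted_MLE_close:
  fixes X :: "nat \<Rightarrow> 'w \<Rightarrow> _" and n :: nat and \<omega> :: 'w
  defines "s \<equiv> avg_stat t X n \<omega>"
  assumes n: "0 < n" and s: "norm (s - mu \<theta>0) < c_low * r0"
    and MLE: "(\<exists>\<theta>. is_arg_max (likelihood \<nu> t X n \<omega>) (\<lambda>\<theta>. \<theta> \<in> \<Theta> \<and> mixed_param \<nu> t \<theta> \<in> Mu' \<times> Thv') \<theta>)
          \<Longrightarrow> is_arg_max (likelihood \<nu> t X n \<omega>) (\<lambda>\<theta>. \<theta> \<in> \<Theta> \<and> mixed_param \<nu> t \<theta> \<in> Mu' \<times> Thv') \<theta>t"
  shows "\<theta>t \<in> \<Theta>" "norm (\<theta>t - \<theta>0) \<le> norm (s - mu \<theta>0) / c_low"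
proof -
  define F where "F \<theta> \<longleftrightarrow> \<theta> \<in> \<Theta> \<and> mixed_param \<nu> t \<theta> \<in> Mu' \<times> Thv'" for \<theta>
  have F_iff: "F \<theta> \<longleftrightarrow> \<theta> \<in> \<Theta> \<and> fst (mu \<theta>) \<in> Mu' \<and> snd \<theta> \<in> Thv'" for \<theta>
    unfolding F_def mixed_param_def by auto
  have lik: "likelihood \<nu> t X n \<omega> \<theta> < likelihood \<nu> t X n \<omega> \<theta>' \<longleftrightarrow> loglik s \<theta> < loglik s \<theta>'"
    if "\<theta> \<in> \<Theta>" "\<theta>' \<in> \<Theta>" for \<theta> \<theta>'
    using that n by (simp add: likelihood_eq s_def)
  obtain \<theta>s where \<theta>s: "\<theta>s \<in> \<Theta>" "fst (mu \<theta>s) \<in> Mu' \<and> snd \<theta>s \<in> Thv'"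
    "\<And>\<theta>. \<theta> \<in> \<Theta> \<Longrightarrow> fst (mu \<theta>) \<in> Mu' \<and> snd \<theta> \<in> Thv' \<Longrightarrow> loglik s \<theta> \<le> loglik s \<theta>s"
    using loglik_max_exists[OF s _ compact_feasible(1)] \<theta>0_feasible by blast
  have "is_arg_max (likelihood \<nu> t X n \<omega>) F \<theta>s"
    unfolding is_arg_max_def
  proof (intro conjI notI)
    show "F \<theta>s" using \<theta>s(1,2) F_iff by blast
    assume "\<exists>\<theta>. F \<theta> \<and> likelihood \<nu> t X n \<omega> \<theta>s < likelihood \<nu> t X n \<omega> \<theta>"
    then obtain \<theta> where "F \<theta>" "likelihood \<nu> t X n \<omega> \<theta>s < likelihood \<nu> t X n \<omega> \<theta>" by blast
    then show False using lik \<theta>s F_iff by (meson not_less)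
  qed
  then have am: "is_arg_max (likelihood \<nu> t X n \<omega>) F \<theta>t" using MLE unfolding F_def by blast
  have "F \<theta>0" using \<theta>0_in \<theta>0_feasible F_iff by blast
  then have "\<not> likelihood \<nu> t X n \<omega> \<theta>t < likelihood \<nu> t X n \<omega> \<theta>0" using am unfolding is_arg_max_def by blast
  moreover show \<theta>t: "\<theta>t \<in> \<Theta>" using am F_iff unfolding is_arg_max_def by blast
  ultimately have "loglik s \<theta>0 \<le> loglik s \<theta>t" using lik[OF \<theta>t \<theta>0_in] by simp
  then show "norm (\<theta>t - \<theta>0) \<le> norm (s - mu \<theta>0) / c_low" by (rule norm_le_if_loglik_ge[OF \<theta>t _ s])
qed

text \<open>Since \<open>K(\<mu>(\<theta>s), \<cdot>) = loglik s \<theta>s - loglik s\<close> for \<open>s = \<mu>(\<theta>s)\<close>, the first dual step is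
  the restricted maximum likelihood problem without the constraint on \<open>\<mu>\<^sub>u\<close>.\<close>
lemma dual_first_step_close:
  assumes s: "norm (s - mu \<theta>0) < c_low * r0 / 2"
    and dual1: "(\<exists>\<theta>. is_arg_min (KL_div \<nu> t s) (\<lambda>\<theta>. snd \<theta> \<in> Thv') \<theta>)
          \<Longrightarrow> is_arg_min (KL_div \<nu> t s) (\<lambda>\<theta>. snd \<theta> \<in> Thv') \<theta>h"
  shows "\<theta>h \<in> \<Theta>" "norm (\<theta>h - \<theta>0) \<le> norm (s - mu \<theta>0) / c_low"
proof -
  have s': "norm (s - mu \<theta>0) < c_low * r0" using s mult_pos_pos[OF c_low_pos r0(1)] by linarith
  obtain \<theta>s where \<theta>s: "\<theta>s \<in> \<Theta>" "mu \<theta>s = s" using mean_param_local_surj[OF s] by blast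
  have KL_in: "KL_div \<nu> t s \<theta> = ereal (loglik s \<theta>s - loglik s \<theta>)" if "\<theta> \<in> \<Theta>" for \<theta>
    using KL_div_mean_param[OF \<theta>s(1) that] loglik_mean_param_diff[of \<theta>s \<theta>] \<theta>s(2) by simp
  have KL_out: "KL_div \<nu> t s \<theta> = \<infinity>" if "\<theta> \<notin> \<Theta>" for \<theta>
    using KL_div_mean_param_outside[OF \<theta>s(1) that] \<theta>s(2) by simp
  obtain \<theta>m where \<theta>m: "\<theta>m \<in> \<Theta>" "snd \<theta>m \<in> Thv'"
    "\<And>\<theta>. \<theta> \<in> \<Theta> \<Longrightarrow> snd \<theta> \<in> Thv' \<Longrightarrow> loglik s \<theta> \<le> loglik s \<theta>m"
    using loglik_max_exists[OF s' \<theta>0_feasible(2) compact_feasible(2)] by blast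
  have "is_arg_min (KL_div \<nu> t s) (\<lambda>\<theta>. snd \<theta> \<in> Thv') \<theta>m"
    unfolding is_arg_min_def
  proof (intro conjI notI)
    show "snd \<theta>m \<in> Thv'" by (rule \<theta>m(2))
    assume "\<exists>\<theta>. snd \<theta> \<in> Thv' \<and> KL_div \<nu> t s \<theta> < KL_div \<nu> t s \<theta>m"
    then obtain \<theta> where "snd \<theta> \<in> Thv'" "KL_div \<nu> t s \<theta> < KL_div \<nu> t s \<theta>m" by blast
    then show False using \<theta>m KL_in KL_out by (cases "\<theta> \<in> \<Theta>") (auto simp: not_le[symmetric])
  qed
  then have "is_arg_min (KL_div \<nu> t s) (\<lambda>\<theta>. snd \<theta> \<in> Thv') \<theta>h" using dual1 by blast
  then have not_less: "\<not> KL_div \<nu> t s \<theta>0 < KL_div \<nu> t s \<theta>h"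
    using \<theta>0_feasible unfolding is_arg_min_def by blast
  show \<theta>h: "\<theta>h \<in> \<Theta>" using not_less KL_in[OF \<theta>0_in] KL_out by fastforce
  have "loglik s \<theta>0 \<le> loglik s \<theta>h" using not_less KL_in[OF \<theta>0_in] KL_in[OF \<theta>h] by simp
  then show "norm (\<theta>h - \<theta>0) \<le> norm (s - mu \<theta>0) / c_low" by (rule norm_le_if_loglik_ge[OF \<theta>h _ s'])
qed

text \<open>Candidates farther than \<open>r0\<close> from \<open>\<theta>0\<close> are worse than \<open>\<theta>0\<close>, so compactness near \<open>\<theta>0\<close>
  suffices.\<close>
lemma bregman_constrained_min_exists:
  assumes \<theta>h: "norm (\<theta>h - \<theta>0) \<le> \<rho>" and \<rho>: "\<rho> \<le> r0"
    and small: "(2 * C_up + L_mu) * \<rho> < c_low * r0"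
  shows "\<exists>\<theta>m\<in>\<Theta>. fst (mu \<theta>m) \<in> Mu' \<and>
           (\<forall>\<theta>'\<in>\<Theta>. fst (mu \<theta>') \<in> Mu' \<longrightarrow> bregman \<theta>m \<theta>h \<le> bregman \<theta>' \<theta>h)"
proof -
  define K where "K = {\<theta> \<in> cball \<theta>0 r0. fst (mu \<theta>) \<in> Mu'}"
  have \<theta>0K: "\<theta>0 \<in> K" unfolding K_def using \<theta>0_feasible r0 by simp
  have "continuous_on K (\<lambda>\<theta>'. bregman \<theta>' \<theta>h)"
    using continuous_on_A continuous_on_mean_param unfolding bregman_def[abs_def] K_def
    by (intro continuous_intros) (auto elim: continuous_on_subset)
  then obtain \<theta>m where \<theta>m: "\<theta>m \<in> K" "\<And>\<theta>'. \<theta>' \<in> K \<Longrightarrow> bregman \<theta>m \<theta>h \<le> bregman \<theta>' \<theta>h"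
    using continuous_attains_inf[OF compact_feasible(3)[folded K_def]] \<theta>0K by blast
  have "bregman \<theta>m \<theta>h \<le> bregman \<theta>' \<theta>h" if "\<theta>' \<in> \<Theta>" "fst (mu \<theta>') \<in> Mu'" for \<theta>'
  proof (rule ccontr)
    assume lt: "\<not> ?thesis"
    then have "norm (\<theta>' - \<theta>0) \<le> (2 * C_up + L_mu) * \<rho> / c_low"
      using \<theta>m(2)[OF \<theta>0K] by (intro dual_candidate_close(2)[OF that(1) \<theta>h \<rho> small]) simp
    also have "\<dots> < r0" using small c_low_pos by (simp add: field_simps)
    finally have "\<theta>' \<in> K" using that(2) unfolding K_def by (simp add: dist_norm norm_minus_commute)
    then show False using \<theta>m(2) lt by blast
  qed
  moreover have "\<theta>m \<in> \<Theta>" "fst (mu \<theta>m) \<in> Mu'" using \<theta>m(1) mem_Theta_cball unfolding K_def by auto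
  ultimately show ?thesis by blast
qed

lemma dual_second_step_close:
  assumes \<theta>h: "\<theta>h \<in> \<Theta>" "norm (\<theta>h - \<theta>0) \<le> \<rho>" and \<rho>: "\<rho> \<le> r0"
    and small: "(2 * C_up + L_mu) * \<rho> < c_low * r0"
    and dual2: "(\<exists>\<mu>. is_arg_min (\<lambda>\<mu>. KL_div \<nu> t \<mu> \<theta>h) (\<lambda>\<mu>. \<mu> \<in> mean_space \<nu> t \<and> fst \<mu> \<in> Mu') \<mu>)
          \<Longrightarrow> is_arg_min (\<lambda>\<mu>. KL_div \<nu> t \<mu> \<theta>h) (\<lambda>\<mu>. \<mu> \<in> mean_space \<nu> t \<and> fst \<mu> \<in> Mu') \<mu>c"
  obtains \<theta>' where "\<theta>' \<in> \<Theta>" "\<mu>c = mu \<theta>'" "norm (mu \<theta>' - mu \<theta>0) \<le> (2 * C_up + L_mu) * \<rho>"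
    "norm (\<theta>' - \<theta>0) \<le> (2 * C_up + L_mu) * \<rho> / c_low"
proof -
  define F where "F \<mu> \<longleftrightarrow> \<mu> \<in> mean_space \<nu> t \<and> fst \<mu> \<in> Mu'" for \<mu>
  have F_iff: "F \<mu> \<longleftrightarrow> (\<exists>\<theta>\<in>\<Theta>. \<mu> = mu \<theta> \<and> fst (mu \<theta>) \<in> Mu')" for \<mu>
    unfolding F_def mean_space_def by auto
  have KL: "KL_div \<nu> t (mu \<theta>') \<theta>h = ereal (bregman \<theta>' \<theta>h)" if "\<theta>' \<in> \<Theta>" for \<theta>'
    using KL_div_mean_param[OF that \<theta>h(1)] .
  obtain \<theta>m where \<theta>m: "\<theta>m \<in> \<Theta>" "fst (mu \<theta>m) \<in> Mu'"
    "\<And>\<theta>'. \<theta>' \<in> \<Theta> \<Longrightarrow> fst (mu \<theta>') \<in> Mu' \<Longrightarrow> bregman \<theta>m \<theta>h \<le> bregman \<theta>' \<theta>h"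
    using bregman_constrained_min_exists[OF \<theta>h(2) \<rho> small] by blast
  have "is_arg_min (\<lambda>\<mu>. KL_div \<nu> t \<mu> \<theta>h) F (mu \<theta>m)"
    unfolding is_arg_min_def
  proof (intro conjI notI)
    show "F (mu \<theta>m)" using \<theta>m(1,2) unfolding F_iff by blast
    assume "\<exists>\<mu>. F \<mu> \<and> KL_div \<nu> t \<mu> \<theta>h < KL_div \<nu> t (mu \<theta>m) \<theta>h"
    then obtain \<theta>' where "\<theta>' \<in> \<Theta>" "fst (mu \<theta>') \<in> Mu'" "KL_div \<nu> t (mu \<theta>') \<theta>h < KL_div \<nu> t (mu \<theta>m) \<theta>h"
      unfolding F_iff by blast
    then show False using \<theta>m by (simp add: KL not_less[symmetric])
  qed
  then have "is_arg_min (\<lambda>\<mu>. KL_div \<nu> t \<mu> \<theta>h) F \<mu>c" using dual2 unfolding F_def by blast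
  moreover have "F (mu \<theta>0)" using \<theta>0_in \<theta>0_feasible unfolding F_iff by blast
  ultimately have "F \<mu>c" "\<not> KL_div \<nu> t (mu \<theta>0) \<theta>h < KL_div \<nu> t \<mu>c \<theta>h"
    unfolding is_arg_min_def by blast+
  then obtain \<theta>' where \<theta>': "\<theta>' \<in> \<Theta>" "\<mu>c = mu \<theta>'" "bregman \<theta>' \<theta>h \<le> bregman \<theta>0 \<theta>h"
    unfolding F_iff using \<theta>0_in by (auto simp: KL)
  then show ?thesis using that dual_candidate_close[OF \<theta>'(1) \<theta>h(2) \<rho> small] by blast
qed

lemma restricted_MLE_bound:
  fixes X :: "nat \<Rightarrow> 'w \<Rightarrow> _" and n :: nat and \<omega> :: 'w
  defines "s \<equiv> avg_stat t X n \<omega>"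
  assumes n: "0 < n" and s: "norm (s - mu \<theta>0) \<le> \<delta>0"
    and MLE: "(\<exists>\<theta>. is_arg_max (likelihood \<nu> t X n \<omega>) (\<lambda>\<theta>. \<theta> \<in> \<Theta> \<and> mixed_param \<nu> t \<theta> \<in> Mu' \<times> Thv') \<theta>)
          \<Longrightarrow> is_arg_max (likelihood \<nu> t X n \<omega>) (\<lambda>\<theta>. \<theta> \<in> \<Theta> \<and> mixed_param \<nu> t \<theta> \<in> Mu' \<times> Thv') \<theta>t"
  shows "norm (mixed_param \<nu> t \<theta>t - mixed_param \<nu> t \<theta>0) \<le> (L_mu + 1) / c_low * norm (s - mu \<theta>0)"
proof -
  note small = small_deviation[OF s]
  have \<theta>t: "\<theta>t \<in> \<Theta>" and close: "norm (\<theta>t - \<theta>0) \<le> norm (s - mu \<theta>0) / c_low"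
    using restricted_MLE_close[OF n small(2)[unfolded s_def] MLE] unfolding s_def by auto
  have "norm (mixed_param \<nu> t \<theta>t - mixed_param \<nu> t \<theta>0)
      \<le> norm (fst (mu \<theta>t) - fst (mu \<theta>0)) + norm (snd \<theta>t - snd \<theta>0)"
    unfolding mixed_param_def by (rule norm_Pair_diff_le)
  also have "\<dots> \<le> norm (mu \<theta>t - mu \<theta>0) + norm (\<theta>t - \<theta>0)"
    using norm_fst_diff_le[of "mu \<theta>t" "mu \<theta>0"] norm_snd_diff_le[of \<theta>t \<theta>0] by simp
  also have "\<dots> \<le> (L_mu + 1) * norm (\<theta>t - \<theta>0)"
    using mean_param_lipschitz[of \<theta>t \<theta>0] close small(3) r0 by (simp add: algebra_simps)
  also have "\<dots> \<le> (L_mu + 1) * (norm (s - mu \<theta>0) / c_low)"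
    using close L_mu_nonneg by (intro mult_left_mono) auto
  finally show ?thesis by simp
qed

lemma dual_estimator_bound:
  assumes s: "norm (s - mu \<theta>0) \<le> \<delta>0"
    and dual1: "(\<exists>\<theta>. is_arg_min (KL_div \<nu> t s) (\<lambda>\<theta>. snd \<theta> \<in> Thv') \<theta>)
          \<Longrightarrow> is_arg_min (KL_div \<nu> t s) (\<lambda>\<theta>. snd \<theta> \<in> Thv') \<theta>h"
    and dual2: "(\<exists>\<mu>. is_arg_min (\<lambda>\<mu>. KL_div \<nu> t \<mu> \<theta>h) (\<lambda>\<mu>. \<mu> \<in> mean_space \<nu> t \<and> fst \<mu> \<in> Mu') \<mu>)
          \<Longrightarrow> is_arg_min (\<lambda>\<mu>. KL_div \<nu> t \<mu> \<theta>h) (\<lambda>\<mu>. \<mu> \<in> mean_space \<nu> t \<and> fst \<mu> \<in> Mu') \<mu>c"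
  shows "norm ((fst \<mu>c, snd (canon_of_mean \<nu> t \<mu>c)) - mixed_param \<nu> t \<theta>0)
           \<le> (2 * C_up + L_mu) * (1 + 1 / c_low) / c_low * norm (s - mu \<theta>0)"
proof -
  note small = small_deviation[OF s]
  define \<rho> where "\<rho> = norm (s - mu \<theta>0) / c_low"
  have \<theta>h: "\<theta>h \<in> \<Theta>" "norm (\<theta>h - \<theta>0) \<le> \<rho>"
    using dual_first_step_close[OF small(1) dual1] unfolding \<rho>_def by auto
  obtain \<theta>' where \<theta>': "\<theta>' \<in> \<Theta>" "\<mu>c = mu \<theta>'" "norm (mu \<theta>' - mu \<theta>0) \<le> (2 * C_up + L_mu) * \<rho>"
      "norm (\<theta>' - \<theta>0) \<le> (2 * C_up + L_mu) * \<rho> / c_low"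
    using dual_second_step_close[OF \<theta>h _ _ dual2] small(3,4) unfolding \<rho>_def by blast
  have "norm ((fst \<mu>c, snd \<theta>') - mixed_param \<nu> t \<theta>0)
      \<le> norm (fst \<mu>c - fst (mu \<theta>0)) + norm (snd \<theta>' - snd \<theta>0)"
    unfolding mixed_param_def by (rule norm_Pair_diff_le)
  also have "\<dots> \<le> norm (mu \<theta>' - mu \<theta>0) + norm (\<theta>' - \<theta>0)"
    using norm_fst_diff_le[of \<mu>c "mu \<theta>0"] norm_snd_diff_le[of \<theta>' \<theta>0] \<theta>'(2) by simp
  also have "\<dots> \<le> (2 * C_up + L_mu) * \<rho> + (2 * C_up + L_mu) * \<rho> / c_low" using \<theta>'(3,4) by simp
  also have "\<dots> = (2 * C_up + L_mu) * (1 + 1 / c_low) / c_low * norm (s - mu \<theta>0)"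
    unfolding \<rho>_def using c_low_pos by (simp add: field_simps)
  finally show ?thesis using canon_of_mean_mean_param[OF \<theta>'(1)] \<theta>'(2) by simp
qed

end

section \<open>Concentration of the average statistic\<close>

locale iid_sample = exp_family_at +
  fixes P :: "'w measure" and X :: "nat \<Rightarrow> 'w \<Rightarrow> _"
  assumes prob_space_P: "prob_space P"
    and X_indep: "prob_space.indep_vars P (\<lambda>_. \<nu>) X UNIV"
    and X_distr: "\<And>i. distr P \<nu> (X i) = ef_distr \<nu> t \<theta>0"
begin

sublocale P: prob_space P by (rule prob_space_P)

lemma X_measurable[measurable]: "X i \<in> measurable P \<nu>"
  using X_indep unfolding P.indep_vars_def by auto

lemma indep_var_X:
  assumes "i \<noteq> j"
  shows "P.indep_var \<nu> (X i) \<nu> (X j)"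
proof -
  have "P.indep_var \<nu> ((\<lambda>f. f i) \<circ> (\<lambda>\<omega>. restrict (\<lambda>i. X i \<omega>) {i}))
                     \<nu> ((\<lambda>f. f j) \<circ> (\<lambda>\<omega>. restrict (\<lambda>i. X i \<omega>) {j}))"
    using assms by (intro P.indep_var_compose[OF P.indep_var_restrict[OF X_indep]]) auto
  also have "(\<lambda>f. f i) \<circ> (\<lambda>\<omega>. restrict (\<lambda>i. X i \<omega>) {i}) = X i" by auto
  also have "(\<lambda>f. f j) \<circ> (\<lambda>\<omega>. restrict (\<lambda>i. X i \<omega>) {j}) = X j" by auto
  finally show ?thesis .
qed

definition p0 where "p0 x = exp (t x \<bullet> \<theta>0) / Z \<theta>0" for x

lemma p0_pos: "0 < p0 x"
  unfolding p0_def using Z_pos[OF \<theta>0_in] by simp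

lemma p0_measurable[measurable]: "p0 \<in> borel_measurable \<nu>"
  unfolding p0_def by measurable

lemma distr_X: "distr P \<nu> (X i) = density \<nu> (\<lambda>x. ennreal (p0 x))"
  unfolding X_distr ef_distr_def p0_def using ef_density_eq[OF \<theta>0_in] by simp

lemma integrable_X_iff:
  fixes f :: "_ \<Rightarrow> 'v::{banach, second_countable_topology}"
  assumes [measurable]: "f \<in> borel_measurable \<nu>"
  shows "integrable P (\<lambda>\<omega>. f (X i \<omega>)) \<longleftrightarrow> integrable \<nu> (\<lambda>x. p0 x *\<^sub>R f x)"
proof -
  have "integrable P (\<lambda>\<omega>. f (X i \<omega>)) \<longleftrightarrow> integrable (distr P \<nu> (X i)) f"
    by (rule integrable_distr_eq[symmetric]) auto
  also have "\<dots> \<longleftrightarrow> integrable \<nu> (\<lambda>x. p0 x *\<^sub>R f x)"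
    unfolding distr_X by (rule integrable_density) (auto intro: less_imp_le[OF p0_pos])
  finally show ?thesis .
qed

lemma integral_X_eq:
  fixes f :: "_ \<Rightarrow> 'v::{banach, second_countable_topology}"
  assumes [measurable]: "f \<in> borel_measurable \<nu>"
  shows "(\<integral>\<omega>. f (X i \<omega>) \<partial>P) = (\<integral>x. p0 x *\<^sub>R f x \<partial>\<nu>)"
proof -
  have "(\<integral>\<omega>. f (X i \<omega>) \<partial>P) = integral\<^sup>L (distr P \<nu> (X i)) f"
    by (rule integral_distr[symmetric]) auto
  also have "\<dots> = (\<integral>x. p0 x *\<^sub>R f x \<partial>\<nu>)"
    unfolding distr_X by (rule integral_density) (auto intro: less_imp_le[OF p0_pos])
  finally show ?thesis .
qed

lemma p0_integrable: "integrable \<nu> p0" "(\<integral>x. p0 x \<partial>\<nu>) = 1"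
proof -
  have "integrable \<nu> (\<lambda>x. exp (t x \<bullet> \<theta>0))" using \<theta>0_in mem_Theta_iff by blast
  then show "integrable \<nu> p0" unfolding p0_def by simp
  show "(\<integral>x. p0 x \<partial>\<nu>) = 1" using Z_pos[OF \<theta>0_in] unfolding p0_def by (simp add: Z_def)
qed

lemma p0_mean: "integrable \<nu> (\<lambda>x. p0 x *\<^sub>R t x)" "(\<integral>x. p0 x *\<^sub>R t x \<partial>\<nu>) = mu \<theta>0"
proof -
  have eq: "(\<lambda>x. p0 x *\<^sub>R t x) = (\<lambda>x. (1 / Z \<theta>0) *\<^sub>R (exp (t x \<bullet> \<theta>0) *\<^sub>R t x))"
    unfolding p0_def by (simp add: fun_eq_iff)
  show "integrable \<nu> (\<lambda>x. p0 x *\<^sub>R t x)"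
    unfolding eq by (rule integrable_scaleR_right[OF integrable_N[OF \<theta>0_in]])
  show "(\<integral>x. p0 x *\<^sub>R t x \<partial>\<nu>) = mu \<theta>0"
    unfolding mean_param_def using ef_density_eq[OF \<theta>0_in] unfolding p0_def by simp
qed

lemma p0_second_moment: "integrable \<nu> (\<lambda>x. p0 x * (norm (t x - mu \<theta>0))\<^sup>2)"
proof (rule Bochner_Integration.integrable_bound)
  show "integrable \<nu> (\<lambda>x. 2 / Z \<theta>0 * (exp (t x \<bullet> \<theta>0) * (norm (t x))\<^sup>2) + 2 * (norm (mu \<theta>0))\<^sup>2 * p0 x)"
    using integrable_exp_norm_sq[OF \<theta>0_in] p0_integrable(1)
    by (intro Bochner_Integration.integrable_add integrable_mult_right)
  have "p0 x * (norm (t x - mu \<theta>0))\<^sup>2 \<le> p0 x * (2 * (norm (t x))\<^sup>2 + 2 * (norm (mu \<theta>0))\<^sup>2)" for x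
  proof -
    have "(norm (t x - mu \<theta>0))\<^sup>2 \<le> (norm (t x) + norm (mu \<theta>0))\<^sup>2"
      by (intro power_mono norm_triangle_ineq4) auto
    also have "\<dots> \<le> 2 * (norm (t x))\<^sup>2 + 2 * (norm (mu \<theta>0))\<^sup>2"
      using sum_squares_bound[of "norm (t x)" "norm (mu \<theta>0)"] by (simp add: power2_eq_square algebra_simps)
    finally show ?thesis using p0_pos[of x] by (intro mult_left_mono) auto
  qed
  then show "AE x in \<nu>. norm (p0 x * (norm (t x - mu \<theta>0))\<^sup>2)
      \<le> norm (2 / Z \<theta>0 * (exp (t x \<bullet> \<theta>0) * (norm (t x))\<^sup>2) + 2 * (norm (mu \<theta>0))\<^sup>2 * p0 x)"
    using p0_pos Z_pos[OF \<theta>0_in] unfolding p0_def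
    by (intro AE_I2) (simp add: abs_of_nonneg less_imp_le algebra_simps)
qed simp

definition var0 where "var0 = (\<integral>x. p0 x * (norm (t x - mu \<theta>0))\<^sup>2 \<partial>\<nu>)"

lemma var0_nonneg: "0 \<le> var0"
  unfolding var0_def using p0_pos by (intro integral_nonneg_AE AE_I2 mult_nonneg_nonneg) (auto intro: less_imp_le)

definition dev where "dev i b \<omega> = (t (X i \<omega>) - mu \<theta>0) \<bullet> b" for i b \<omega>

lemma dev_measurable[measurable]: "dev i b \<in> borel_measurable P"
  unfolding dev_def by measurable

lemma dev_mean_zero: "integrable P (dev i b)" "(\<integral>\<omega>. dev i b \<omega> \<partial>P) = 0"
proof -
  have eq: "(\<lambda>x. p0 x *\<^sub>R ((t x - mu \<theta>0) \<bullet> b)) = (\<lambda>x. (p0 x *\<^sub>R t x) \<bullet> b - (mu \<theta>0 \<bullet> b) * p0 x)"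
    by (simp add: fun_eq_iff algebra_simps inner_diff_left)
  have int: "integrable \<nu> (\<lambda>x. (p0 x *\<^sub>R t x) \<bullet> b)" "integrable \<nu> (\<lambda>x. (mu \<theta>0 \<bullet> b) * p0 x)"
    using integrable_inner_left[OF p0_mean(1)] integrable_mult_right[OF p0_integrable(1)] by blast+
  have "integrable \<nu> (\<lambda>x. p0 x *\<^sub>R ((t x - mu \<theta>0) \<bullet> b))"
    unfolding eq using int by (rule Bochner_Integration.integrable_diff)
  then show "integrable P (dev i b)"
    unfolding dev_def using integrable_X_iff[of "\<lambda>x. (t x - mu \<theta>0) \<bullet> b" i] by simp
  have "(\<integral>\<omega>. dev i b \<omega> \<partial>P) = (\<integral>x. p0 x *\<^sub>R ((t x - mu \<theta>0) \<bullet> b) \<partial>\<nu>)"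
    unfolding dev_def by (rule integral_X_eq) measurable
  also have "\<dots> = (\<integral>x. (p0 x *\<^sub>R t x) \<bullet> b \<partial>\<nu>) - (mu \<theta>0 \<bullet> b) * (\<integral>x. p0 x \<partial>\<nu>)"
    unfolding eq Bochner_Integration.integral_diff[OF int] by simp
  also have "(\<integral>x. (p0 x *\<^sub>R t x) \<bullet> b \<partial>\<nu>) = (\<integral>x. p0 x *\<^sub>R t x \<partial>\<nu>) \<bullet> b"
    by (rule integral_inner_left) (use p0_mean(1) in auto)
  finally show "(\<integral>\<omega>. dev i b \<omega> \<partial>P) = 0" using p0_mean(2) p0_integrable(2) by simp
qed

lemma norm_dev_sq:
  "integrable P (\<lambda>\<omega>. (norm (t (X i \<omega>) - mu \<theta>0))\<^sup>2)"
  "(\<integral>\<omega>. (norm (t (X i \<omega>) - mu \<theta>0))\<^sup>2 \<partial>P) = var0"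
  using integrable_X_iff[of "\<lambda>x. (norm (t x - mu \<theta>0))\<^sup>2" i] p0_second_moment
    integral_X_eq[of "\<lambda>x. (norm (t x - mu \<theta>0))\<^sup>2" i]
  unfolding var0_def by simp_all

lemma dev_products:
  assumes b: "b \<in> Basis"
  shows "integrable P (\<lambda>\<omega>. dev i b \<omega> * dev j b \<omega>)"
    and "i \<noteq> j \<Longrightarrow> (\<integral>\<omega>. dev i b \<omega> * dev j b \<omega> \<partial>P) = 0"
proof -
  define g where "g x = (t x - mu \<theta>0) \<bullet> b" for x
  have g: "g \<in> borel_measurable \<nu>" unfolding g_def by measurable
  have eq: "g \<circ> X k = dev k b" for k unfolding g_def dev_def by auto
  have sq: "integrable P (\<lambda>\<omega>. dev i b \<omega> * dev i b \<omega>)"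
  proof (rule Bochner_Integration.integrable_bound[OF norm_dev_sq(1)])
    have "\<bar>dev i b \<omega>\<bar> \<le> norm (t (X i \<omega>) - mu \<theta>0)" for \<omega>
      unfolding dev_def by (rule Basis_le_norm[OF b])
    then have "\<bar>dev i b \<omega>\<bar> * \<bar>dev i b \<omega>\<bar> \<le> norm (t (X i \<omega>) - mu \<theta>0) * norm (t (X i \<omega>) - mu \<theta>0)" for \<omega>
      by (intro mult_mono) auto
    then show "AE \<omega> in P. norm (dev i b \<omega> * dev i b \<omega>) \<le> norm ((norm (t (X i \<omega>) - mu \<theta>0))\<^sup>2)"
      by (intro AE_I2) (simp add: abs_mult power2_eq_square)
  qed simp
  have indep: "P.indep_var borel (dev i b) borel (dev j b)" if "i \<noteq> j"
    using P.indep_var_compose[OF indep_var_X[OF that] g g] unfolding eq .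
  show "integrable P (\<lambda>\<omega>. dev i b \<omega> * dev j b \<omega>)"
  proof (cases "i = j")
    case False
    then show ?thesis using P.indep_var_integrable[OF indep dev_mean_zero(1) dev_mean_zero(1)] by simp
  qed (use sq in simp)
  show "(\<integral>\<omega>. dev i b \<omega> * dev j b \<omega> \<partial>P) = 0" if "i \<noteq> j"
    using P.indep_var_lebesgue_integral[OF indep[OF that] dev_mean_zero(1) dev_mean_zero(1)]
      dev_mean_zero(2) by simp
qed

definition centered_sum where "centered_sum n \<omega> = (\<Sum>i<n. t (X i \<omega>) - mu \<theta>0)" for n \<omega>

lemma centered_sum_measurable[measurable]: "centered_sum n \<in> borel_measurable P"
  unfolding centered_sum_def by measurable

lemma avg_stat_minus_mean: "0 < n \<Longrightarrow> avg_stat t X n \<omega> - mu \<theta>0 = (1 / real n) *\<^sub>R centered_sum n \<omega>"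
  unfolding avg_stat_def centered_sum_def
  by (simp add: sum_subtractf scaleR_diff_right sum_constant_scaleR)

text \<open>Cross terms vanish by independence.\<close>
lemma centered_sum_second_moment:
  "integrable P (\<lambda>\<omega>. (norm (centered_sum n \<omega>))\<^sup>2)"
  "(\<integral>\<omega>. (norm (centered_sum n \<omega>))\<^sup>2 \<partial>P) = real n * var0"
proof -
  have sq_eq: "(norm v)\<^sup>2 = (\<Sum>b\<in>Basis. (v \<bullet> b) * (v \<bullet> b))" for v :: "'b \<times> 'c"
    unfolding power2_norm_eq_inner by (rule euclidean_inner)
  have expand: "(\<lambda>\<omega>. (norm (centered_sum n \<omega>))\<^sup>2) = (\<lambda>\<omega>. \<Sum>b\<in>Basis. \<Sum>i<n. \<Sum>j<n. dev i b \<omega> * dev j b \<omega>)"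
    unfolding sq_eq centered_sum_def dev_def by (simp add: inner_sum_left sum_product)
  show "integrable P (\<lambda>\<omega>. (norm (centered_sum n \<omega>))\<^sup>2)"
    unfolding expand using dev_products(1) by (intro Bochner_Integration.integrable_sum) auto
  have "(\<integral>\<omega>. (norm (centered_sum n \<omega>))\<^sup>2 \<partial>P) = (\<Sum>b\<in>Basis. \<Sum>i<n. \<Sum>j<n. \<integral>\<omega>. dev i b \<omega> * dev j b \<omega> \<partial>P)"
    unfolding expand using dev_products(1)
    by (simp add: Bochner_Integration.integral_sum Bochner_Integration.integrable_sum)
  also have "\<dots> = (\<Sum>b\<in>Basis. \<Sum>i<n. \<integral>\<omega>. dev i b \<omega> * dev i b \<omega> \<partial>P)"
  proof -
    have "(\<Sum>j<n. \<integral>\<omega>. dev i b \<omega> * dev j b \<omega> \<partial>P) = (\<Sum>j\<in>{i}. \<integral>\<omega>. dev i b \<omega> * dev j b \<omega> \<partial>P)"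
      if "b \<in> Basis" "i < n" for b i
      using that dev_products(2) by (intro sum.mono_neutral_right) auto
    then show ?thesis by (intro sum.cong refl) simp
  qed
  also have "\<dots> = (\<Sum>i<n. \<integral>\<omega>. (norm (t (X i \<omega>) - mu \<theta>0))\<^sup>2 \<partial>P)"
    unfolding sq_eq dev_def[symmetric] using dev_products(1)
    by (subst sum.swap) (simp add: Bochner_Integration.integral_sum)
  also have "\<dots> = real n * var0" using norm_dev_sq(2) by simp
  finally show "(\<integral>\<omega>. (norm (centered_sum n \<omega>))\<^sup>2 \<partial>P) = real n * var0" .
qed

lemma avg_stat_deviation_small:
  assumes \<epsilon>: "0 < \<epsilon>"
  shows "\<exists>C>0. \<forall>n>0. \<exists>E\<in>sets P. measure P E < \<epsilon> \<and>
           (\<forall>\<omega>\<in>space P - E. norm (avg_stat t X n \<omega> - mu \<theta>0) \<le> C / sqrt (real n))"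
proof (intro exI[of _ "sqrt (2 * (var0 + 1) / \<epsilon>)"] conjI allI impI)
  define C where "C = sqrt (2 * (var0 + 1) / \<epsilon>)"
  have C: "0 < C" "C\<^sup>2 = 2 * (var0 + 1) / \<epsilon>" unfolding C_def using var0_nonneg \<epsilon> by simp_all
  show "0 < sqrt (2 * (var0 + 1) / \<epsilon>)" using C(1) unfolding C_def .
  fix n :: nat assume n: "0 < n"
  define E where "E = {\<omega> \<in> space P. C\<^sup>2 * real n \<le> (norm (centered_sum n \<omega>))\<^sup>2}"
  have E: "E \<in> sets P" unfolding E_def by measurable
  have "measure P E \<le> (\<integral>\<omega>. (norm (centered_sum n \<omega>))\<^sup>2 \<partial>P) / (C\<^sup>2 * real n)"
    unfolding E_def using C(1) n
    by (intro integral_Markov_inequality_measure[OF centered_sum_second_moment(1)]) auto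
  also have "\<dots> = var0 / C\<^sup>2" unfolding centered_sum_second_moment(2) using n C(1) by simp
  also have "\<dots> = var0 * \<epsilon> / (2 * (var0 + 1))" unfolding C(2) using var0_nonneg \<epsilon> by simp
  also have "\<dots> < \<epsilon>"
  proof -
    have "var0 * \<epsilon> < 2 * (var0 + 1) * \<epsilon>" using \<epsilon> var0_nonneg by (intro mult_strict_right_mono) auto
    then show ?thesis using var0_nonneg by (simp add: field_simps)
  qed
  finally have "measure P E < \<epsilon>" .
  moreover have "norm (avg_stat t X n \<omega> - mu \<theta>0) \<le> C / sqrt (real n)" if "\<omega> \<in> space P - E" for \<omega>
  proof -
    have "(norm (centered_sum n \<omega>))\<^sup>2 < (C * sqrt (real n))\<^sup>2"
      using that unfolding E_def by (auto simp: power_mult_distrib)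
    then have "norm (centered_sum n \<omega>) < C * sqrt (real n)"
      using C by (simp add: power_less_imp_less_base)
    then have "norm (centered_sum n \<omega>) / real n < C * sqrt (real n) / (sqrt (real n) * sqrt (real n))"
      using n by (simp add: divide_strict_right_mono)
    also have "\<dots> = C / sqrt (real n)" using n by (simp add: divide_simps del: real_sqrt_mult_self)
    finally show ?thesis unfolding avg_stat_minus_mean[OF n] using n by simp
  qed
  ultimately show "\<exists>E\<in>sets P. measure P E < \<epsilon> \<and>
      (\<forall>\<omega>\<in>space P - E. norm (avg_stat t X n \<omega> - mu \<theta>0) \<le> sqrt (2 * (var0 + 1) / \<epsilon>) / sqrt (real n))"
    using E unfolding C_def by blast
qed

end

section \<open>Boundedness in probability of the estimators\<close>

lemma bounded_in_prob_of_local_bound: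
  fixes Y :: "nat \<Rightarrow> 'w \<Rightarrow> 'c::real_normed_vector" and S :: "nat \<Rightarrow> 'w \<Rightarrow> 'd::real_normed_vector"
  assumes K: "0 \<le> K" and \<delta>: "0 < \<delta>"
    and S_small: "\<And>\<epsilon>. 0 < \<epsilon> \<Longrightarrow> \<exists>C>0. \<forall>n>0. \<exists>E\<in>sets P. measure P E < \<epsilon> \<and>
                   (\<forall>\<omega>\<in>space P - E. norm (S n \<omega>) \<le> C / sqrt (real n))"
    and local_bound: "\<And>n \<omega>. 0 < n \<Longrightarrow> \<omega> \<in> space P \<Longrightarrow> norm (S n \<omega>) \<le> \<delta> \<Longrightarrow>
                   norm (Y n \<omega>) \<le> sqrt (real n) * K * norm (S n \<omega>)"
  shows "bounded_in_prob P Y"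
  unfolding bounded_in_prob_def
proof (intro allI impI)
  fix \<epsilon> :: real assume "0 < \<epsilon>"
  then obtain C where C: "0 < C" "\<forall>n>0. \<exists>E\<in>sets P. measure P E < \<epsilon> \<and>
                 (\<forall>\<omega>\<in>space P - E. norm (S n \<omega>) \<le> C / sqrt (real n))"
    using S_small by blast
  define N where "N = nat \<lceil>(C / \<delta>)\<^sup>2\<rceil> + 1"
  have "\<exists>E\<in>sets P. {\<omega> \<in> space P. K * C < norm (Y n \<omega>)} \<subseteq> E \<and> measure P E < \<epsilon>"
    if "N \<le> n" for n
  proof -
    have n: "0 < n" using that unfolding N_def by simp
    have "sqrt ((C / \<delta>)\<^sup>2) \<le> sqrt (real n)"
      using that unfolding N_def by (intro real_sqrt_le_mono) linarith
    then have "C / \<delta> \<le> sqrt (real n)" using C \<delta> by simp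
    then have "C / sqrt (real n) \<le> \<delta>" using \<delta> n by (simp add: field_simps)
    moreover obtain E where E: "E \<in> sets P" "measure P E < \<epsilon>"
      "\<forall>\<omega>\<in>space P - E. norm (S n \<omega>) \<le> C / sqrt (real n)"
      using C(2) n by blast
    ultimately have "norm (Y n \<omega>) \<le> K * C" if "\<omega> \<in> space P - E" for \<omega>
    proof -
      have S: "norm (S n \<omega>) \<le> C / sqrt (real n)" using E(3) that by blast
      have "norm (Y n \<omega>) \<le> sqrt (real n) * K * norm (S n \<omega>)"
        using local_bound[OF n] S that \<open>C / sqrt (real n) \<le> \<delta>\<close> by auto
      also have "\<dots> \<le> sqrt (real n) * K * (C / sqrt (real n))" using S K by (intro mult_left_mono) auto
      finally show ?thesis using n by simp
    qed
    then have "{\<omega> \<in> space P. K * C < norm (Y n \<omega>)} \<subseteq> E" by force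
    with E show ?thesis by blast
  qed
  then show "\<exists>C N. \<forall>n\<ge>N. \<exists>E\<in>sets P. {\<omega> \<in> space P. C < norm (Y n \<omega>)} \<subseteq> E \<and> measure P E < \<epsilon>"
    by blast
qed

locale mixed_subfamily_sample =
  mixed_subfamily \<nu> t \<theta>0 Mu' Thv' + iid_sample \<nu> t \<theta>0 P X
  for \<nu> t \<theta>0 Mu' Thv' P X
begin

lemma bounded_in_prob_if_lipschitz_at_mean:
  assumes K: "0 \<le> K"
    and bound: "\<And>n \<omega>. 0 < n \<Longrightarrow> norm (avg_stat t X n \<omega> - mu \<theta>0) \<le> \<delta>0 \<Longrightarrow>
                  norm (Y n \<omega>) \<le> K * norm (avg_stat t X n \<omega> - mu \<theta>0)"
  shows "bounded_in_prob P (\<lambda>n \<omega>. sqrt (real n) *\<^sub>R Y n \<omega>)"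
proof (rule bounded_in_prob_of_local_bound[OF K \<delta>0(1) avg_stat_deviation_small])
  fix n \<omega> assume "0 < n" "norm (avg_stat t X n \<omega> - mu \<theta>0) \<le> \<delta>0"
  then show "norm (sqrt (real n) *\<^sub>R Y n \<omega>) \<le> sqrt (real n) * K * norm (avg_stat t X n \<omega> - mu \<theta>0)"
    using bound by (simp add: mult.assoc mult_left_mono)
qed

lemma bounded_in_prob_unrestricted:
  "bounded_in_prob P (\<lambda>n \<omega>. sqrt (real n) *\<^sub>R
     ((fst (avg_stat t X n \<omega>), snd (canon_of_mean \<nu> t (avg_stat t X n \<omega>))) - mixed_param \<nu> t \<theta>0))"
proof (rule bounded_in_prob_if_lipschitz_at_mean)
  show "0 \<le> 1 + 1 / c_low" using c_low_pos by simp
qed (rule unrestricted_estimator_bound)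

lemma bounded_in_prob_restricted_MLE:
  assumes MLE: "\<And>n \<omega>. (\<exists>\<theta>. is_arg_max (likelihood \<nu> t X n \<omega>)
                    (\<lambda>\<theta>. \<theta> \<in> \<Theta> \<and> mixed_param \<nu> t \<theta> \<in> Mu' \<times> Thv') \<theta>)
          \<Longrightarrow> is_arg_max (likelihood \<nu> t X n \<omega>)
                (\<lambda>\<theta>. \<theta> \<in> \<Theta> \<and> mixed_param \<nu> t \<theta> \<in> Mu' \<times> Thv') (\<theta>til n \<omega>)"
  shows "bounded_in_prob P (\<lambda>n \<omega>. sqrt (real n) *\<^sub>R (mixed_param \<nu> t (\<theta>til n \<omega>) - mixed_param \<nu> t \<theta>0))"
proof (rule bounded_in_prob_if_lipschitz_at_mean)
  show "0 \<le> (L_mu + 1) / c_low" using c_low_pos L_mu_nonneg by simp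
qed (rule restricted_MLE_bound[OF _ _ MLE])

lemma bounded_in_prob_dual:
  assumes dual1: "\<And>n \<omega>. (\<exists>\<theta>. is_arg_min (KL_div \<nu> t (avg_stat t X n \<omega>)) (\<lambda>\<theta>. snd \<theta> \<in> Thv') \<theta>)
          \<Longrightarrow> is_arg_min (KL_div \<nu> t (avg_stat t X n \<omega>)) (\<lambda>\<theta>. snd \<theta> \<in> Thv') (\<theta>hat n \<omega>)"
    and dual2: "\<And>n \<omega>. (\<exists>\<mu>. is_arg_min (\<lambda>\<mu>. KL_div \<nu> t \<mu> (\<theta>hat n \<omega>))
                    (\<lambda>\<mu>. \<mu> \<in> mean_space \<nu> t \<and> fst \<mu> \<in> Mu') \<mu>)
          \<Longrightarrow> is_arg_min (\<lambda>\<mu>. KL_div \<nu> t \<mu> (\<theta>hat n \<omega>))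
                (\<lambda>\<mu>. \<mu> \<in> mean_space \<nu> t \<and> fst \<mu> \<in> Mu') (\<mu>chk n \<omega>)"
  shows "bounded_in_prob P (\<lambda>n \<omega>. sqrt (real n) *\<^sub>R
            ((fst (\<mu>chk n \<omega>), snd (canon_of_mean \<nu> t (\<mu>chk n \<omega>))) - mixed_param \<nu> t \<theta>0))"
proof (rule bounded_in_prob_if_lipschitz_at_mean)
  show "0 \<le> (2 * C_up + L_mu) * (1 + 1 / c_low) / c_low" using c_low_pos L_mu_nonneg C_up_pos by simp
qed (rule dual_estimator_bound[OF _ dual1 dual2])

end

theorem lemmaA7:
  fixes \<nu> :: "'x measure"
    and t :: "'x \<Rightarrow> ('a::euclidean_space \<times> 'b::euclidean_space)"
    and P :: "'w measure"
    and X :: "nat \<Rightarrow> 'w \<Rightarrow> 'x"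
    and Mu' :: "'a set" and Thv' :: "'b set"
    and \<theta>0 \<psi>0 :: "'a \<times> 'b"
    and \<theta>til \<theta>hat \<mu>chk :: "nat \<Rightarrow> 'w \<Rightarrow> 'a \<times> 'b"
  assumes t_meas: "t \<in> borel_measurable \<nu>"
    and minimal: "minimal_rep \<nu> t"
    and regular: "regular_ef \<nu> t"
    and Mu'_sub: "Mu' \<subseteq> fst ` mean_space \<nu> t"
    and Mu'_convex: "convex Mu'"
    and Mu'_closed: "closedin (top_of_set (fst ` mean_space \<nu> t)) Mu'"
    and Thv'_sub: "Thv' \<subseteq> snd ` nat_param_space \<nu> t"
    and Thv'_convex: "convex Thv'"
    and Thv'_closed: "closedin (top_of_set (snd ` nat_param_space \<nu> t)) Thv'"
    and \<theta>0_in: "\<theta>0 \<in> nat_param_space \<nu> t"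
    and \<psi>0_def: "\<psi>0 = mixed_param \<nu> t \<theta>0"
    and \<psi>0_in: "\<psi>0 \<in> Mu' \<times> Thv'"
    and P_prob: "prob_space P"
    and X_indep: "prob_space.indep_vars P (\<lambda>_. \<nu>) X UNIV"
    and X_distr: "\<And>i. distr P \<nu> (X i) = ef_distr \<nu> t \<theta>0"
    and MLE: "\<And>n \<omega>. (\<exists>\<theta>. is_arg_max (likelihood \<nu> t X n \<omega>)
                    (\<lambda>\<theta>. \<theta> \<in> nat_param_space \<nu> t \<and> mixed_param \<nu> t \<theta> \<in> Mu' \<times> Thv') \<theta>)
          \<Longrightarrow> is_arg_max (likelihood \<nu> t X n \<omega>)
                (\<lambda>\<theta>. \<theta> \<in> nat_param_space \<nu> t \<and> mixed_param \<nu> t \<theta> \<in> Mu' \<times> Thv') (\<theta>til n \<omega>)"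
    and dual1: "\<And>n \<omega>. (\<exists>\<theta>. is_arg_min (KL_div \<nu> t (avg_stat t X n \<omega>)) (\<lambda>\<theta>. snd \<theta> \<in> Thv') \<theta>)
          \<Longrightarrow> is_arg_min (KL_div \<nu> t (avg_stat t X n \<omega>)) (\<lambda>\<theta>. snd \<theta> \<in> Thv') (\<theta>hat n \<omega>)"
    and dual2: "\<And>n \<omega>. (\<exists>\<mu>. is_arg_min (\<lambda>\<mu>. KL_div \<nu> t \<mu> (\<theta>hat n \<omega>))
                    (\<lambda>\<mu>. \<mu> \<in> mean_space \<nu> t \<and> fst \<mu> \<in> Mu') \<mu>)
          \<Longrightarrow> is_arg_min (\<lambda>\<mu>. KL_div \<nu> t \<mu> (\<theta>hat n \<omega>))
                (\<lambda>\<mu>. \<mu> \<in> mean_space \<nu> t \<and> fst \<mu> \<in> Mu') (\<mu>chk n \<omega>)"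
  shows "bounded_in_prob P (\<lambda>n \<omega>. sqrt (real n) *\<^sub>R
            ((fst (avg_stat t X n \<omega>), snd (canon_of_mean \<nu> t (avg_stat t X n \<omega>))) - \<psi>0))
       \<and> bounded_in_prob P (\<lambda>n \<omega>. sqrt (real n) *\<^sub>R (mixed_param \<nu> t (\<theta>til n \<omega>) - \<psi>0))
       \<and> bounded_in_prob P (\<lambda>n \<omega>. sqrt (real n) *\<^sub>R
            ((fst (\<mu>chk n \<omega>), snd (canon_of_mean \<nu> t (\<mu>chk n \<omega>))) - \<psi>0))"
proof -
  have family: "mixed_subfamily \<nu> t \<theta>0 Mu' Thv'"
    using t_meas minimal regular \<theta>0_in Mu'_closed Thv'_closed \<psi>0_in[unfolded \<psi>0_def]
    by unfold_locales
  have "iid_sample_axioms \<nu> t \<theta>0 P X"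
    using P_prob X_indep X_distr by (rule iid_sample_axioms.intro)
  then interpret mixed_subfamily_sample \<nu> t \<theta>0 Mu' Thv' P X
    using family by (intro mixed_subfamily_sample.intro iid_sample.intro mixed_subfamily.axioms(1))
  show ?thesis
    unfolding \<psi>0_def
    using bounded_in_prob_unrestricted bounded_in_prob_restricted_MLE[OF MLE]
      bounded_in_prob_dual[OF dual1 dual2]
    by blast
qed

end
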